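(* If a connected signed graph $(G,\sigma)$ admits two prime $s$-decompositions $D_1$ and $D_2$, then there are signed graphs $(X,\pi_X)$ and $(Y,\pi_Y)$ with $(G,\sigma)\equiv(X,\pi_X)\,\square\,(Y,\pi_Y)$, $D_1=\{(X,\pi_X)\}\cup D_1'$ and $D_2=\{(X,\pi_X)\}\cup D_2'$, where $D_1'$ and $D_2'$ are $s$-decompositions of $(Y,\pi_Y)$.
   Context: A signed graph $(G,\sigma)$ is a simple loopless undirected graph with a signature $\sigma:E(G)\to\{+1,-1\}$. Switching a vertex negates the signs of its incident edges. Two signed graphs are equivalent ($\equiv$) if there is a graph isomorphism between them carrying one signature to a signature obtained from the other by switching a set of vertices; multiset membership of signed graphs is understood up to $\equiv$. The Cartesian product $(G,\sigma)\,\square\,(H,\pi)$ is the signed graph on $G\,\square\,H$ where $(u,v_1)(u,v_2)$ has sign $\pi(v_1v_2)$ and $(u_1,v)(u_2,v)$ has sign $\sigma(u_1u_2)$. A signed graph is $s$-prime if it is not equivalent to a Cartesian product of two signed graphs each with at least two vertices. An $s$-decomposition of a signed graph $(G,\sigma)$ is a multiset $\{(G_1,\pi_1),\dots,(G_k,\pi_k)\}$ of signed graphs each with at least one edge such that $(G,\sigma)\equiv(G_1,\pi_1)\,\square\cdots\square\,(G_k,\pi_k)$; it is prime if all factors are $s$-prime. *)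

theory Defs
  imports Main "HOL-Library.Multiset"
begin

text \<open>A (finite) signed graph: vertex set, symmetric irreflexive adjacency relation
  (ordered pairs, both orientations present), and a signature on edges.
  Values of sgn off the edges are irrelevant.\<close>
record 'v sgraph =
  verts :: "'v set"
  arcs  :: "('v \<times> 'v) set"
  sgn   :: "'v \<Rightarrow> 'v \<Rightarrow> int"

definition wf_sgraph :: "'v sgraph \<Rightarrow> bool" where
  "wf_sgraph G \<longleftrightarrow> finite (verts G) \<and> arcs G \<subseteq> verts G \<times> verts G
     \<and> (\<forall>u v. (u, v) \<in> arcs G \<longrightarrow> (v, u) \<in> arcs G)
     \<and> (\<forall>u. (u, u) \<notin> arcs G)
     \<and> (\<forall>u v. (u, v) \<in> arcs G \<longrightarrow> sgn G u v \<in> {1, -1} \<and> sgn G u v = sgn G v u)"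

definition sconnected :: "'v sgraph \<Rightarrow> bool" where
  "sconnected G \<longleftrightarrow> verts G \<noteq> {} \<and> (\<forall>u\<in>verts G. \<forall>v\<in>verts G. (u, v) \<in> (arcs G)\<^sup>*)"

definition switch_sign :: "'v set \<Rightarrow> 'v \<Rightarrow> 'v \<Rightarrow> int" where
  "switch_sign S u v = (if (u \<in> S) = (v \<in> S) then 1 else -1)"

definition sequiv :: "'a sgraph \<Rightarrow> 'b sgraph \<Rightarrow> bool" where
  "sequiv G H \<longleftrightarrow> (\<exists>f S. bij_betw f (verts G) (verts H) \<and> S \<subseteq> verts G
     \<and> (\<forall>u\<in>verts G. \<forall>v\<in>verts G. (u, v) \<in> arcs G \<longleftrightarrow> (f u, f v) \<in> arcs H)
     \<and> (\<forall>u v. (u, v) \<in> arcs G \<longrightarrow> sgn H (f u) (f v) = switch_sign S u v * sgn G u v))"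

definition sprod :: "'a sgraph \<Rightarrow> 'b sgraph \<Rightarrow> ('a \<times> 'b) sgraph" where
  "sprod G H = \<lparr> verts = verts G \<times> verts H,
     arcs = {((u, v1), (u, v2)) | u v1 v2. u \<in> verts G \<and> (v1, v2) \<in> arcs H}
          \<union> {((u1, v), (u2, v)) | u1 u2 v. (u1, u2) \<in> arcs G \<and> v \<in> verts H},
     sgn = (\<lambda>(u1, v1) (u2, v2). if u1 = u2 then sgn H v1 v2 else sgn G u1 u2) \<rparr>"

text \<open>Cartesian product of a finite list of signed graphs (vertices are tuples, as lists).
  The empty product is the one-vertex graph.\<close>
definition sprod_list :: "'b sgraph list \<Rightarrow> 'b list sgraph" where
  "sprod_list Gs = \<lparr> verts = {xs. length xs = length Gs \<and> (\<forall>i<length Gs. xs ! i \<in> verts (Gs ! i))},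
     arcs = {(xs, ys). length xs = length Gs \<and> length ys = length Gs
              \<and> (\<forall>i<length Gs. xs ! i \<in> verts (Gs ! i) \<and> ys ! i \<in> verts (Gs ! i))
              \<and> (\<exists>i<length Gs. (xs ! i, ys ! i) \<in> arcs (Gs ! i)
                    \<and> (\<forall>j<length Gs. j \<noteq> i \<longrightarrow> xs ! j = ys ! j))},
     sgn = (\<lambda>xs ys. let i = (LEAST i. i < length Gs \<and> xs ! i \<noteq> ys ! i)
                    in sgn (Gs ! i) (xs ! i) (ys ! i)) \<rparr>"

text \<open>s-prime: not equivalent to a product of two signed graphs with at least two vertices
  each. Since all graphs are finite, factors can be taken with vertices in nat.\<close>
definition s_prime :: "'v sgraph \<Rightarrow> bool" where
  "s_prime G \<longleftrightarrow> wf_sgraph G \<and>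
     \<not> (\<exists>(H :: nat sgraph) (K :: nat sgraph). wf_sgraph H \<and> wf_sgraph K \<and> card (verts H) \<ge> 2 \<and> card (verts K) \<ge> 2
           \<and> sequiv G (sprod H K))"

definition s_decomposition :: "'b sgraph multiset \<Rightarrow> 'a sgraph \<Rightarrow> bool" where
  "s_decomposition D G \<longleftrightarrow> (\<forall>H\<in>#D. wf_sgraph H \<and> arcs H \<noteq> {})
     \<and> (\<exists>Hs. mset Hs = D \<and> sequiv G (sprod_list Hs))"

definition prime_s_decomposition :: "'b sgraph multiset \<Rightarrow> 'a sgraph \<Rightarrow> bool" where
  "prime_s_decomposition D G \<longleftrightarrow> s_decomposition D G \<and> (\<forall>H\<in>#D. s_prime H)"

abbreviation mset_sequiv :: "'b sgraph multiset \<Rightarrow> 'b sgraph multiset \<Rightarrow> bool" where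
  "mset_sequiv M N \<equiv> rel_mset sequiv M N"

end

theory Submission
  imports Defs "HOL-Combinatorics.Permutations"
begin

text \<open>Compare the two product representations through an equivalence \<open>h\<close> between them.
  A layer of a factor \<open>X\<close> of the first decomposition (the vertices differing from a given one
  only in the \<open>X\<close>-coordinate) is connected and no two of its vertices have a common
  neighbour outside it. Its image under \<open>h\<close> inherits both properties, and in a Cartesian
  product such a set is a box, the product of its projections. As \<open>X\<close> is prime, only one
  projection is nontrivial, so \<open>h\<close> maps the layer into, and by symmetry onto, a layer of a
  single factor \<open>X'\<close> of the second decomposition; a square argument shows that \<open>X'\<close> is the
  same for adjacent layers, hence for all of them. Then \<open>X \<equiv> X'\<close>, and \<open>h\<close> maps the
  complementary co-layers onto each other, which identifies the products of the remaining
  factors.\<close>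

section \<open>Equivalence of signed graphs\<close>

definition closed_sgraph :: "'v sgraph \<Rightarrow> bool" where
  "closed_sgraph G \<longleftrightarrow> arcs G \<subseteq> verts G \<times> verts G"

definition sequiv_via :: "('a \<Rightarrow> 'b) \<Rightarrow> 'a set \<Rightarrow> 'a sgraph \<Rightarrow> 'b sgraph \<Rightarrow> bool" where
  "sequiv_via f S G H \<longleftrightarrow> bij_betw f (verts G) (verts H) \<and> S \<subseteq> verts G
     \<and> (\<forall>u\<in>verts G. \<forall>v\<in>verts G. (u, v) \<in> arcs G \<longleftrightarrow> (f u, f v) \<in> arcs H)
     \<and> (\<forall>u v. (u, v) \<in> arcs G \<longrightarrow> sgn H (f u) (f v) = switch_sign S u v * sgn G u v)"

lemma sequiv_iff_via: "sequiv G H \<longleftrightarrow> (\<exists>f S. sequiv_via f S G H)"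
  unfolding sequiv_def sequiv_via_def by blast

lemma sequivI: "sequiv_via f S G H \<Longrightarrow> sequiv G H"
  unfolding sequiv_iff_via by blast

lemma sequiv_viaD:
  assumes "sequiv_via f S G H"
  shows "bij_betw f (verts G) (verts H)" "S \<subseteq> verts G"
    "\<And>u v. u \<in> verts G \<Longrightarrow> v \<in> verts G \<Longrightarrow> (u, v) \<in> arcs G \<longleftrightarrow> (f u, f v) \<in> arcs H"
    "\<And>u v. (u, v) \<in> arcs G \<Longrightarrow> sgn H (f u) (f v) = switch_sign S u v * sgn G u v"
  using assms unfolding sequiv_via_def by blast+

lemma switch_sign_empty [simp]: "switch_sign {} u v = 1"
  unfolding switch_sign_def by simp

lemma switch_sign_square: "switch_sign S u v * switch_sign S u v = 1"
  unfolding switch_sign_def by auto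

lemma sequiv_via_emptyI:
  assumes "bij_betw f (verts G) (verts H)"
    and "\<And>u v. u \<in> verts G \<Longrightarrow> v \<in> verts G \<Longrightarrow> (u, v) \<in> arcs G \<longleftrightarrow> (f u, f v) \<in> arcs H"
    and "\<And>u v. (u, v) \<in> arcs G \<Longrightarrow> sgn H (f u) (f v) = sgn G u v"
  shows "sequiv_via f {} G H"
  using assms unfolding sequiv_via_def by simp

lemma wf_sgraphI:
  assumes "finite (verts G)"
    and "\<And>x y. (x, y) \<in> arcs G \<Longrightarrow> x \<in> verts G \<and> y \<in> verts G \<and> (y, x) \<in> arcs G \<and> x \<noteq> y
             \<and> sgn G x y \<in> {1, -1} \<and> sgn G x y = sgn G y x"
  shows "wf_sgraph G"
  unfolding wf_sgraph_def using assms by (auto simp: subset_iff)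

lemma wf_sgraph_closed: "wf_sgraph G \<Longrightarrow> closed_sgraph G"
  unfolding wf_sgraph_def closed_sgraph_def by blast

lemma wf_sgraph_arc_verts: "wf_sgraph G \<Longrightarrow> (a, b) \<in> arcs G \<Longrightarrow> a \<in> verts G \<and> b \<in> verts G"
  unfolding wf_sgraph_def by blast

lemma wf_sgraph_irrefl: "wf_sgraph G \<Longrightarrow> (a, b) \<in> arcs G \<Longrightarrow> a \<noteq> b"
  unfolding wf_sgraph_def by blast

lemma wf_sgraph_no_loop: "wf_sgraph G \<Longrightarrow> (a, a) \<notin> arcs G"
  unfolding wf_sgraph_def by blast

lemma wf_sgraph_sym: "wf_sgraph G \<Longrightarrow> (a, b) \<in> arcs G \<Longrightarrow> (b, a) \<in> arcs G"
  unfolding wf_sgraph_def by blast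

lemma sequiv_via_id: "sequiv_via id {} G G"
  unfolding sequiv_via_def by simp

lemma sequiv_refl: "sequiv G G"
  using sequivI[OF sequiv_via_id] .

lemma sequiv_via_inv:
  assumes H: "closed_sgraph H" and f: "sequiv_via f S G H"
  shows "sequiv_via (inv_into (verts G) f) (f ` S) H G"
proof -
  let ?g = "inv_into (verts G) f"
  note b = sequiv_viaD(1)[OF f] and arc = sequiv_viaD(3)[OF f] and sg = sequiv_viaD(4)[OF f]
  have inj: "inj_on f (verts G)" using bij_betw_imp_inj_on[OF b] .
  have fg: "\<And>x. x \<in> verts H \<Longrightarrow> f (?g x) = x" using bij_betw_inv_into_right[OF b] .
  have gV: "\<And>x. x \<in> verts H \<Longrightarrow> ?g x \<in> verts G" using bij_betw_apply[OF bij_betw_inv_into[OF b]] .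
  have arc_g: "(x, y) \<in> arcs H \<longleftrightarrow> (?g x, ?g y) \<in> arcs G" if "x \<in> verts H" "y \<in> verts H" for x y
    using arc[OF gV[OF that(1)] gV[OF that(2)]] fg[OF that(1)] fg[OF that(2)] by simp
  have "sgn G (?g x) (?g y) = switch_sign (f ` S) x y * sgn H x y" if xy: "(x, y) \<in> arcs H" for x y
  proof -
    have V: "x \<in> verts H" "y \<in> verts H" using H xy unfolding closed_sgraph_def by auto
    have "z \<in> f ` S \<longleftrightarrow> ?g z \<in> S" if "z \<in> verts H" for z
    proof -
      have "z \<in> f ` S \<longleftrightarrow> f (?g z) \<in> f ` S" using fg[OF that] by simp
      also have "\<dots> \<longleftrightarrow> ?g z \<in> S"
        using inj_on_image_mem_iff[OF inj gV[OF that] sequiv_viaD(2)[OF f]] .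
      finally show ?thesis .
    qed
    hence sw: "switch_sign (f ` S) x y = switch_sign S (?g x) (?g y)"
      using V unfolding switch_sign_def by simp
    have "(?g x, ?g y) \<in> arcs G" using arc_g[OF V] xy by simp
    from sg[OF this] have "sgn H x y = switch_sign S (?g x) (?g y) * sgn G (?g x) (?g y)"
      using fg[OF V(1)] fg[OF V(2)] by simp
    hence "switch_sign (f ` S) x y * sgn H x y
        = (switch_sign S (?g x) (?g y) * switch_sign S (?g x) (?g y)) * sgn G (?g x) (?g y)"
      unfolding sw by (simp only: mult.assoc)
    thus ?thesis unfolding switch_sign_square by simp
  qed
  moreover have "f ` S \<subseteq> verts H" using b sequiv_viaD(2)[OF f] bij_betwE by blast
  ultimately show ?thesis
    unfolding sequiv_via_def using bij_betw_inv_into[OF b] arc_g by blast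
qed

lemma sequiv_sym: "closed_sgraph H \<Longrightarrow> sequiv G H \<Longrightarrow> sequiv H G"
  using sequiv_via_inv sequiv_iff_via by metis

lemma sequiv_via_comp:
  assumes G: "closed_sgraph G" and f: "sequiv_via f S G H" and g: "sequiv_via g T H K"
  shows "sequiv_via (g \<circ> f) {u \<in> verts G. (u \<in> S) \<noteq> (f u \<in> T)} G K"
proof -
  let ?U = "{u \<in> verts G. (u \<in> S) \<noteq> (f u \<in> T)}"
  have fV: "\<And>u. u \<in> verts G \<Longrightarrow> f u \<in> verts H" using bij_betw_apply[OF sequiv_viaD(1)[OF f]] .
  have arc: "(u, v) \<in> arcs G \<longleftrightarrow> ((g \<circ> f) u, (g \<circ> f) v) \<in> arcs K"
    if "u \<in> verts G" "v \<in> verts G" for u v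
    using sequiv_viaD(3)[OF f that] sequiv_viaD(3)[OF g fV fV] that by simp
  have "sgn K ((g \<circ> f) u) ((g \<circ> f) v) = switch_sign ?U u v * sgn G u v" if uv: "(u, v) \<in> arcs G" for u v
  proof -
    have V: "u \<in> verts G" "v \<in> verts G" using G uv unfolding closed_sgraph_def by auto
    have "switch_sign ?U u v = switch_sign T (f u) (f v) * switch_sign S u v"
      using V unfolding switch_sign_def by auto
    thus ?thesis
      using sequiv_viaD(4)[OF f uv] sequiv_viaD(4)[OF g] sequiv_viaD(3)[OF f V] uv by simp
  qed
  with arc show ?thesis
    unfolding sequiv_via_def
    using bij_betw_trans[OF sequiv_viaD(1)[OF f] sequiv_viaD(1)[OF g]] by auto
qed

lemma sequiv_trans: "closed_sgraph G \<Longrightarrow> sequiv G H \<Longrightarrow> sequiv H K \<Longrightarrow> sequiv G K"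
  unfolding sequiv_iff_via using sequiv_via_comp by blast

lemma wf_sgraph_via:
  assumes G: "wf_sgraph G" and f: "sequiv_via f S G H" and H: "closed_sgraph H"
  shows "wf_sgraph H"
proof -
  note b = sequiv_viaD(1)[OF f] and arc = sequiv_viaD(3)[OF f] and sg = sequiv_viaD(4)[OF f]
  have pre: "\<exists>u v. (u, v) \<in> arcs G \<and> x = f u \<and> y = f v" if "(x, y) \<in> arcs H" for x y
  proof -
    have "x \<in> verts H" "y \<in> verts H" using H that unfolding closed_sgraph_def by auto
    then obtain u v where "u \<in> verts G" "v \<in> verts G" "x = f u" "y = f v"
      using bij_betw_imp_surj_on[OF b] by blast
    thus ?thesis using arc that by blast
  qed
  show ?thesis
  proof (rule wf_sgraphI)
    show "finite (verts H)" using G b bij_betw_finite unfolding wf_sgraph_def by blast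
    fix x y assume xy: "(x, y) \<in> arcs H"
    then obtain u v where uv: "(u, v) \<in> arcs G" "x = f u" "y = f v" using pre by blast
    have V: "u \<in> verts G" "v \<in> verts G" using wf_sgraph_arc_verts[OF G uv(1)] by auto
    have vu: "(v, u) \<in> arcs G" using wf_sgraph_sym[OF G uv(1)] .
    have "f u \<noteq> f v"
      using wf_sgraph_irrefl[OF G uv(1)] bij_betw_imp_inj_on[OF b] V by (meson inj_onD)
    moreover have "sgn G u v \<in> {1, -1}" "sgn G u v = sgn G v u"
      using G uv(1) unfolding wf_sgraph_def by blast+
    moreover have "switch_sign S u v = switch_sign S v u" "switch_sign S u v \<in> {1, -1}"
      unfolding switch_sign_def by auto
    moreover have "x \<in> verts H" "y \<in> verts H" using H xy unfolding closed_sgraph_def by auto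
    ultimately show "x \<in> verts H \<and> y \<in> verts H \<and> (y, x) \<in> arcs H \<and> x \<noteq> y
        \<and> sgn H x y \<in> {1, -1} \<and> sgn H x y = sgn H y x"
      using arc[OF V(2,1)] vu uv sg[OF uv(1)] sg[OF vu] V by auto
  qed
qed

lemma rtrancl_map:
  assumes "(a, b) \<in> R\<^sup>*" and "\<And>p q. (p, q) \<in> R \<Longrightarrow> (f p, f q) \<in> R'"
  shows "(f a, f b) \<in> R'\<^sup>*"
  using assms(1) by induction (auto intro: rtrancl_into_rtrancl assms(2))

lemma sconnected_via:
  assumes G: "wf_sgraph G" "sconnected G" and f: "sequiv_via f S G H"
  shows "sconnected H"
proof -
  note b = sequiv_viaD(1)[OF f]
  have "(f u, f v) \<in> (arcs H)\<^sup>*" if "u \<in> verts G" "v \<in> verts G" for u v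
  proof (rule rtrancl_map[where f = f])
    show "(u, v) \<in> (arcs G)\<^sup>*" using G(2) that unfolding sconnected_def by blast
    show "(f p, f q) \<in> arcs H" if "(p, q) \<in> arcs G" for p q
      using that sequiv_viaD(3)[OF f] wf_sgraph_arc_verts[OF G(1) that] by blast
  qed
  moreover have "verts G \<noteq> {}" using G(2) unfolding sconnected_def by blast
  ultimately show ?thesis
    unfolding sconnected_def bij_betw_imp_surj_on[OF b, symmetric] by blast
qed

definition induced :: "'v sgraph \<Rightarrow> 'v set \<Rightarrow> 'v sgraph" where
  "induced G T = \<lparr> verts = T, arcs = arcs G \<inter> (T \<times> T), sgn = sgn G \<rparr>"

lemma induced_simps [simp]:
  "verts (induced G T) = T" "arcs (induced G T) = arcs G \<inter> (T \<times> T)" "sgn (induced G T) = sgn G"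
  unfolding induced_def by auto

lemma closed_induced [simp]: "closed_sgraph (induced G T)"
  unfolding closed_sgraph_def by auto

lemma wf_induced: "wf_sgraph G \<Longrightarrow> T \<subseteq> verts G \<Longrightarrow> wf_sgraph (induced G T)"
  unfolding wf_sgraph_def by (auto intro: finite_subset)

lemma sequiv_via_induced:
  assumes f: "sequiv_via f S G H" and T: "T \<subseteq> verts G"
  shows "sequiv_via f (S \<inter> T) (induced G T) (induced H (f ` T))"
proof -
  note b = sequiv_viaD(1)[OF f]
  have "bij_betw f T (f ` T)"
    using inj_on_subset[OF bij_betw_imp_inj_on[OF b] T] by (rule inj_on_imp_bij_betw)
  moreover have "(u, v) \<in> arcs G \<inter> T \<times> T \<longleftrightarrow> (f u, f v) \<in> arcs H \<inter> f ` T \<times> f ` T"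
    if "u \<in> T" "v \<in> T" for u v
    using sequiv_viaD(3)[OF f] that T by blast
  moreover have "switch_sign (S \<inter> T) u v = switch_sign S u v" if "u \<in> T" "v \<in> T" for u v
    using that unfolding switch_sign_def by auto
  ultimately show ?thesis
    unfolding sequiv_via_def using sequiv_viaD(4)[OF f] by auto
qed

text \<open>The factors in the definition of \<open>s_prime\<close> live in \<open>nat sgraph\<close>, so
  every finite signed graph needs a copy with natural-number vertices.\<close>

definition rename_sgraph :: "('a \<Rightarrow> 'b) \<Rightarrow> 'a sgraph \<Rightarrow> 'b sgraph" where
  "rename_sgraph h G = \<lparr> verts = h ` verts G, arcs = map_prod h h ` arcs G,
     sgn = (\<lambda>x y. sgn G (inv_into (verts G) h x) (inv_into (verts G) h y)) \<rparr>"

lemma rename_sgraph_via: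
  assumes h: "inj_on h (verts G)" and G: "wf_sgraph G"
  shows "sequiv_via h {} G (rename_sgraph h G)"
proof (rule sequiv_via_emptyI)
  show "bij_betw h (verts G) (verts (rename_sgraph h G))"
    using h by (simp add: rename_sgraph_def bij_betw_def)
  show "(u, v) \<in> arcs G \<longleftrightarrow> (h u, h v) \<in> arcs (rename_sgraph h G)"
    if uv: "u \<in> verts G" "v \<in> verts G" for u v
  proof
    assume "(h u, h v) \<in> arcs (rename_sgraph h G)"
    then obtain u' v' where a: "(u', v') \<in> arcs G" "h u = h u'" "h v = h v'"
      by (auto simp: rename_sgraph_def)
    have "u = u'" "v = v'"
      using a uv h wf_sgraph_arc_verts[OF G a(1)] by (auto dest: inj_onD)
    with a show "(u, v) \<in> arcs G" by simp
  qed (force simp: rename_sgraph_def)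
  show "sgn (rename_sgraph h G) (h u) (h v) = sgn G u v" if "(u, v) \<in> arcs G" for u v
    using wf_sgraph_arc_verts[OF G that] h by (simp add: rename_sgraph_def)
qed

lemma ex_nat_copy:
  assumes G: "wf_sgraph G"
  obtains H :: "nat sgraph" and h where "wf_sgraph H" "sequiv_via h {} G H" "card (verts H) = card (verts G)"
proof -
  have "finite (verts G)" using G unfolding wf_sgraph_def by blast
  then obtain h :: "_ \<Rightarrow> nat" where b: "bij_betw h (verts G) {0..<card (verts G)}"
    using ex_bij_betw_finite_nat by blast
  have h: "inj_on h (verts G)" using bij_betw_imp_inj_on[OF b] .
  have "closed_sgraph (rename_sgraph h G)"
    using wf_sgraph_closed[OF G] unfolding closed_sgraph_def rename_sgraph_def by auto
  moreover have "card (verts (rename_sgraph h G)) = card (verts G)"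
    using h by (simp add: rename_sgraph_def card_image)
  ultimately show thesis
    using that wf_sgraph_via[OF G rename_sgraph_via[OF h G]] rename_sgraph_via[OF h G] by blast
qed

section \<open>Cartesian products\<close>

lemma sprod_verts [simp]: "verts (sprod H K) = verts H \<times> verts K"
  by (simp add: sprod_def)

lemma sprod_arcs:
  "((a, r), (b, s)) \<in> arcs (sprod H K) \<longleftrightarrow>
     (a = b \<and> a \<in> verts H \<and> (r, s) \<in> arcs K) \<or> ((a, b) \<in> arcs H \<and> r = s \<and> r \<in> verts K)"
  by (simp add: sprod_def) blast

lemma sprod_sgn: "sgn (sprod H K) (a, r) (b, s) = (if a = b then sgn K r s else sgn H a b)"
  by (simp add: sprod_def)

lemma sprod_arcsE:
  assumes "(x, y) \<in> arcs (sprod H K)"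
  obtains a r s where "x = (a, r)" "y = (a, s)" "a \<in> verts H" "(r, s) \<in> arcs K"
  | a b r where "x = (a, r)" "y = (b, r)" "(a, b) \<in> arcs H" "r \<in> verts K"
  using assms that by (cases x, cases y) (auto simp: sprod_arcs)

lemma wf_sprod:
  assumes H: "wf_sgraph H" and K: "wf_sgraph K"
  shows "wf_sgraph (sprod H K)"
proof (rule wf_sgraphI)
  show "finite (verts (sprod H K))" using H K unfolding wf_sgraph_def by simp
  fix x y assume "(x, y) \<in> arcs (sprod H K)"
  then show "x \<in> verts (sprod H K) \<and> y \<in> verts (sprod H K) \<and> (y, x) \<in> arcs (sprod H K) \<and> x \<noteq> y
      \<and> sgn (sprod H K) x y \<in> {1, -1} \<and> sgn (sprod H K) x y = sgn (sprod H K) y x"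
  proof (cases rule: sprod_arcsE)
    case (1 a r s)
    then show ?thesis
      using K wf_sgraph_arc_verts[OF K 1(4)] wf_sgraph_irrefl[OF K 1(4)]
      unfolding wf_sgraph_def by (auto simp: sprod_arcs sprod_sgn)
  next
    case (2 a b r)
    then show ?thesis
      using H wf_sgraph_arc_verts[OF H 2(3)] wf_sgraph_irrefl[OF H 2(3)]
      unfolding wf_sgraph_def by (auto simp: sprod_arcs sprod_sgn)
  qed
qed

lemma sprod_via:
  assumes H: "wf_sgraph H" and K: "wf_sgraph K"
    and f: "sequiv_via f S H H'" and g: "sequiv_via g T K K'"
  shows "sequiv_via (map_prod f g) {(a, r). a \<in> verts H \<and> r \<in> verts K \<and> (a \<in> S) \<noteq> (r \<in> T)}
           (sprod H K) (sprod H' K')"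
proof -
  let ?W = "{(a, r). a \<in> verts H \<and> r \<in> verts K \<and> (a \<in> S) \<noteq> (r \<in> T)}"
  note bf = sequiv_viaD(1)[OF f] and bg = sequiv_viaD(1)[OF g]
  have inj: "inj_on f (verts H)" "inj_on g (verts K)"
    using bij_betw_imp_inj_on[OF bf] bij_betw_imp_inj_on[OF bg] .
  have arc: "(x, y) \<in> arcs (sprod H K) \<longleftrightarrow> (map_prod f g x, map_prod f g y) \<in> arcs (sprod H' K')"
    if "x \<in> verts (sprod H K)" "y \<in> verts (sprod H K)" for x y
  proof -
    obtain a r b s where e: "x = (a, r)" "y = (b, s)" by (cases x, cases y)
    have V: "a \<in> verts H" "r \<in> verts K" "b \<in> verts H" "s \<in> verts K" using that e by auto
    have "f a = f b \<longleftrightarrow> a = b" "g r = g s \<longleftrightarrow> r = s" using inj V by (meson inj_onD)+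
    thus ?thesis
      unfolding e using V bij_betw_apply[OF bf] bij_betw_apply[OF bg]
        sequiv_viaD(3)[OF f, of a b] sequiv_viaD(3)[OF g, of r s] by (simp add: sprod_arcs)
  qed
  have "sgn (sprod H' K') (map_prod f g x) (map_prod f g y) = switch_sign ?W x y * sgn (sprod H K) x y"
    if "(x, y) \<in> arcs (sprod H K)" for x y
    using that
  proof (cases rule: sprod_arcsE)
    case (1 a r s)
    have "r \<in> verts K" "s \<in> verts K" using wf_sgraph_arc_verts[OF K 1(4)] by auto
    hence "switch_sign ?W x y = switch_sign T r s" using 1 unfolding switch_sign_def by auto
    thus ?thesis using 1 sequiv_viaD(4)[OF g 1(4)] by (simp add: sprod_sgn)
  next
    case (2 a b r)
    have V: "a \<in> verts H" "b \<in> verts H" using wf_sgraph_arc_verts[OF H 2(3)] by auto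
    have "a \<noteq> b" using wf_sgraph_irrefl[OF H 2(3)] .
    moreover have "f a \<noteq> f b" using calculation inj(1) V by (meson inj_onD)
    moreover have "switch_sign ?W x y = switch_sign S a b" using 2 V unfolding switch_sign_def by auto
    ultimately show ?thesis using 2 sequiv_viaD(4)[OF f 2(3)] by (simp add: sprod_sgn)
  qed
  moreover have "?W \<subseteq> verts (sprod H K)" by auto
  ultimately show ?thesis
    unfolding sequiv_via_def using bij_betw_map_prod[OF bf bg] arc by simp
qed

lemma sprod_slice_via:
  assumes H: "wf_sgraph H" and a: "a \<in> verts H"
  shows "sequiv_via snd {} (induced (sprod H K) ({a} \<times> verts K)) K"
proof (rule sequiv_via_emptyI)
  show "bij_betw snd (verts (induced (sprod H K) ({a} \<times> verts K))) (verts K)"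
    by (rule bij_betw_byWitness[where f' = "\<lambda>r. (a, r)"]) auto
qed (use a wf_sgraph_no_loop[OF H] in \<open>auto simp: sprod_arcs sprod_sgn\<close>)

lemma sprod_left_commute_via:
  assumes A: "wf_sgraph A" and B: "wf_sgraph B"
  shows "sequiv_via (\<lambda>(a, b, c). (b, a, c)) {} (sprod A (sprod B C)) (sprod B (sprod A C))"
proof (rule sequiv_via_emptyI)
  show "bij_betw (\<lambda>(a, b, c). (b, a, c)) (verts (sprod A (sprod B C))) (verts (sprod B (sprod A C)))"
    by (rule bij_betw_byWitness[where f' = "\<lambda>(b, a, c). (a, b, c)"]) auto
  show "(x, y) \<in> arcs (sprod A (sprod B C))
        \<longleftrightarrow> ((\<lambda>(a, b, c). (b, a, c)) x, (\<lambda>(a, b, c). (b, a, c)) y) \<in> arcs (sprod B (sprod A C))"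
    if "x \<in> verts (sprod A (sprod B C))" "y \<in> verts (sprod A (sprod B C))" for x y
    using that by (cases x, cases y) (auto simp: sprod_arcs)
  show "sgn (sprod B (sprod A C)) ((\<lambda>(a, b, c). (b, a, c)) x) ((\<lambda>(a, b, c). (b, a, c)) y)
        = sgn (sprod A (sprod B C)) x y"
    if "(x, y) \<in> arcs (sprod A (sprod B C))" for x y
    using that wf_sgraph_irrefl[OF A] wf_sgraph_irrefl[OF B]
    by (cases x, cases y) (auto simp: sprod_arcs sprod_sgn)
qed

abbreviation wf_sgraphs :: "'v sgraph list \<Rightarrow> bool" where
  "wf_sgraphs Gs \<equiv> \<forall>G\<in>set Gs. wf_sgraph G"

lemma sprod_list_verts:
  "verts (sprod_list Gs) = {xs. length xs = length Gs \<and> (\<forall>i<length Gs. xs ! i \<in> verts (Gs ! i))}"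
  by (simp add: sprod_list_def)

lemma sprod_list_vertsI:
  "length xs = length Gs \<Longrightarrow> (\<And>i. i < length Gs \<Longrightarrow> xs ! i \<in> verts (Gs ! i))
   \<Longrightarrow> xs \<in> verts (sprod_list Gs)"
  by (simp add: sprod_list_verts)

lemma sprod_list_vertsD:
  "xs \<in> verts (sprod_list Gs) \<Longrightarrow> length xs = length Gs"
  "xs \<in> verts (sprod_list Gs) \<Longrightarrow> i < length Gs \<Longrightarrow> xs ! i \<in> verts (Gs ! i)"
  by (auto simp: sprod_list_verts)

lemma sprod_list_update_vert:
  assumes "xs \<in> verts (sprod_list Gs)" "i < length Gs" "a \<in> verts (Gs ! i)"
  shows "xs[i := a] \<in> verts (sprod_list Gs)"
  using assms sprod_list_vertsD[OF assms(1)] by (intro sprod_list_vertsI) (auto simp: nth_list_update)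

lemma sprod_list_arcs:
  "(xs, ys) \<in> arcs (sprod_list Gs) \<longleftrightarrow> xs \<in> verts (sprod_list Gs) \<and> ys \<in> verts (sprod_list Gs)
     \<and> (\<exists>i<length Gs. (xs ! i, ys ! i) \<in> arcs (Gs ! i) \<and> (\<forall>j<length Gs. j \<noteq> i \<longrightarrow> xs ! j = ys ! j))"
  unfolding sprod_list_def by simp blast

lemma sprod_list_arcsE:
  assumes "(xs, ys) \<in> arcs (sprod_list Gs)"
  obtains i where "i < length Gs" "(xs ! i, ys ! i) \<in> arcs (Gs ! i)"
    "\<And>j. j < length Gs \<Longrightarrow> j \<noteq> i \<Longrightarrow> xs ! j = ys ! j"
    "xs \<in> verts (sprod_list Gs)" "ys \<in> verts (sprod_list Gs)"
  using assms unfolding sprod_list_arcs by blast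

lemma sprod_list_arcsI:
  assumes "xs \<in> verts (sprod_list Gs)" "ys \<in> verts (sprod_list Gs)" "i < length Gs"
    "(xs ! i, ys ! i) \<in> arcs (Gs ! i)" "\<And>j. j < length Gs \<Longrightarrow> j \<noteq> i \<Longrightarrow> xs ! j = ys ! j"
  shows "(xs, ys) \<in> arcs (sprod_list Gs)"
  unfolding sprod_list_arcs using assms by blast

lemma closed_sprod_list: "closed_sgraph (sprod_list Gs)"
  unfolding closed_sgraph_def by (auto simp: sprod_list_arcs)

lemma sprod_list_arc_verts:
  "(xs, ys) \<in> arcs (sprod_list Gs) \<Longrightarrow> xs \<in> verts (sprod_list Gs) \<and> ys \<in> verts (sprod_list Gs)"
  by (simp add: sprod_list_arcs)

lemma sprod_list_arc_at:
  assumes "(xs, ys) \<in> arcs (sprod_list Gs)" "i < length Gs" "xs ! i \<noteq> ys ! i"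
  shows "(xs ! i, ys ! i) \<in> arcs (Gs ! i)" "\<And>j. j < length Gs \<Longrightarrow> j \<noteq> i \<Longrightarrow> xs ! j = ys ! j"
proof -
  obtain p where p: "p < length Gs" "(xs ! p, ys ! p) \<in> arcs (Gs ! p)"
    "\<And>j. j < length Gs \<Longrightarrow> j \<noteq> p \<Longrightarrow> xs ! j = ys ! j"
    using assms(1) by (rule sprod_list_arcsE) blast
  have "p = i" using p(3)[OF assms(2)] assms(3) by blast
  with p show "(xs ! i, ys ! i) \<in> arcs (Gs ! i)" "\<And>j. j < length Gs \<Longrightarrow> j \<noteq> i \<Longrightarrow> xs ! j = ys ! j"
    by auto
qed

lemma sprod_list_arc_neq:
  assumes "wf_sgraphs Gs" and "(xs, ys) \<in> arcs (sprod_list Gs)"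
  obtains i where "i < length Gs" "xs ! i \<noteq> ys ! i"
proof -
  obtain i where "i < length Gs" "(xs ! i, ys ! i) \<in> arcs (Gs ! i)"
    using assms(2) by (rule sprod_list_arcsE)
  with assms(1) that show thesis using wf_sgraph_irrefl nth_mem by metis
qed

lemma sprod_list_arc_unique_index:
  assumes "wf_sgraphs Gs" "(xs, ys) \<in> arcs (sprod_list Gs)" "i < length Gs"
    and "\<And>j. j < length Gs \<Longrightarrow> j \<noteq> i \<Longrightarrow> xs ! j = ys ! j"
  shows "(xs ! i, ys ! i) \<in> arcs (Gs ! i)"
proof -
  obtain p where "p < length Gs" "xs ! p \<noteq> ys ! p" using sprod_list_arc_neq[OF assms(1,2)] .
  with assms(3,4) have "xs ! i \<noteq> ys ! i" by metis
  with sprod_list_arc_at[OF assms(2,3)] show ?thesis by blast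
qed

lemma sprod_list_sgn:
  assumes "length xs = length Gs" "length ys = length Gs" "i < length Gs" "xs ! i \<noteq> ys ! i"
    "\<And>j. j < length Gs \<Longrightarrow> j \<noteq> i \<Longrightarrow> xs ! j = ys ! j"
  shows "sgn (sprod_list Gs) xs ys = sgn (Gs ! i) (xs ! i) (ys ! i)"
proof -
  have "(LEAST j. j < length Gs \<and> xs ! j \<noteq> ys ! j) = i"
    by (rule Least_equality) (use assms in \<open>auto simp: not_less[symmetric]\<close>)
  thus ?thesis by (simp add: sprod_list_def Let_def)
qed

lemma sprod_list_arc_sgn:
  assumes "(xs, ys) \<in> arcs (sprod_list Gs)" "i < length Gs" "xs ! i \<noteq> ys ! i"
  shows "sgn (sprod_list Gs) xs ys = sgn (Gs ! i) (xs ! i) (ys ! i)"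
  using sprod_list_arc_at[OF assms] assms sprod_list_arc_verts[OF assms(1)]
  by (intro sprod_list_sgn) (auto dest: sprod_list_vertsD)

lemma wf_sprod_list:
  assumes Gs: "wf_sgraphs Gs"
  shows "wf_sgraph (sprod_list Gs)"
proof (rule wf_sgraphI)
  have "verts (sprod_list Gs) \<subseteq> {xs. set xs \<subseteq> \<Union>(verts ` set Gs) \<and> length xs = length Gs}"
    by (auto simp: sprod_list_verts in_set_conv_nth) (metis nth_mem)
  moreover have "finite (\<Union>(verts ` set Gs))" using Gs unfolding wf_sgraph_def by auto
  ultimately show "finite (verts (sprod_list Gs))"
    using finite_subset finite_lists_length_eq by blast
next
  fix xs ys assume a: "(xs, ys) \<in> arcs (sprod_list Gs)"
  then obtain i where i: "i < length Gs" "(xs ! i, ys ! i) \<in> arcs (Gs ! i)"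
    "\<And>j. j < length Gs \<Longrightarrow> j \<noteq> i \<Longrightarrow> xs ! j = ys ! j"
    and V: "xs \<in> verts (sprod_list Gs)" "ys \<in> verts (sprod_list Gs)"
    by (rule sprod_list_arcsE) blast
  have G: "wf_sgraph (Gs ! i)" using Gs i(1) by simp
  have ne: "xs ! i \<noteq> ys ! i" using wf_sgraph_irrefl[OF G i(2)] .
  have ba: "(ys, xs) \<in> arcs (sprod_list Gs)"
    using i V wf_sgraph_sym[OF G i(2)] by (intro sprod_list_arcsI[of _ _ _ i]) auto
  have "sgn (Gs ! i) (xs ! i) (ys ! i) \<in> {1, -1}"
    "sgn (Gs ! i) (xs ! i) (ys ! i) = sgn (Gs ! i) (ys ! i) (xs ! i)"
    using G i(2) unfolding wf_sgraph_def by blast+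
  with sprod_list_arc_sgn[OF a i(1) ne] sprod_list_arc_sgn[OF ba i(1) ne[symmetric]]
  show "xs \<in> verts (sprod_list Gs) \<and> ys \<in> verts (sprod_list Gs) \<and> (ys, xs) \<in> arcs (sprod_list Gs)
      \<and> xs \<noteq> ys \<and> sgn (sprod_list Gs) xs ys \<in> {1, -1}
      \<and> sgn (sprod_list Gs) xs ys = sgn (sprod_list Gs) ys xs"
    using V ba ne by auto
qed

lemma sprod_list_Cons_verts:
  "a # r \<in> verts (sprod_list (A # As)) \<longleftrightarrow> a \<in> verts A \<and> r \<in> verts (sprod_list As)"
  by (simp add: sprod_list_verts All_less_Suc2) blast

lemma sprod_list_Cons_arcs:
  "(a # r, b # s) \<in> arcs (sprod_list (A # As)) \<longleftrightarrow>
     a \<in> verts A \<and> b \<in> verts A \<and> r \<in> verts (sprod_list As) \<and> s \<in> verts (sprod_list As) \<and>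
     (((a, b) \<in> arcs A \<and> r = s) \<or> (a = b \<and> (r, s) \<in> arcs (sprod_list As)))"
  unfolding sprod_list_arcs sprod_list_Cons_verts
  by (auto simp: Ex_less_Suc2 All_less_Suc2 list_eq_iff_nth_eq sprod_list_verts)

lemma sequiv_via_comp_sign_preserving:
  "closed_sgraph G \<Longrightarrow> sequiv_via f {} G H \<Longrightarrow> sequiv_via g {} H K \<Longrightarrow> sequiv_via (g \<circ> f) {} G K"
  using sequiv_via_comp[of G f "{}" H g "{}" K] by simp

lemma sprod_list_Cons_via:
  assumes A: "wf_sgraph A" and As: "wf_sgraphs As"
  shows "sequiv_via (\<lambda>x. (hd x, tl x)) {} (sprod_list (A # As)) (sprod A (sprod_list As))"
proof (rule sequiv_via_emptyI)
  have Cons: "\<exists>a r. x = a # r" if "x \<in> verts (sprod_list (A # As))" for x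
    using sprod_list_vertsD(1)[OF that] by (cases x) auto
  have hd_tl: "hd x \<in> verts A \<and> tl x \<in> verts (sprod_list As)" if "x \<in> verts (sprod_list (A # As))" for x
    using Cons[OF that] that by (auto simp: sprod_list_Cons_verts)
  show "bij_betw (\<lambda>x. (hd x, tl x)) (verts (sprod_list (A # As))) (verts (sprod A (sprod_list As)))"
    by (rule bij_betw_byWitness[where f' = "\<lambda>(a, r). a # r"])
      (auto simp: sprod_list_Cons_verts dest: Cons hd_tl)
  show "(x, y) \<in> arcs (sprod_list (A # As)) \<longleftrightarrow> ((hd x, tl x), (hd y, tl y)) \<in> arcs (sprod A (sprod_list As))"
    if "x \<in> verts (sprod_list (A # As))" "y \<in> verts (sprod_list (A # As))" for x y
    using that Cons[OF that(1)] Cons[OF that(2)]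
    by (auto simp: sprod_list_Cons_arcs sprod_list_Cons_verts sprod_arcs)
  show "sgn (sprod A (sprod_list As)) (hd x, tl x) (hd y, tl y) = sgn (sprod_list (A # As)) x y"
    if xy: "(x, y) \<in> arcs (sprod_list (A # As))" for x y
  proof -
    obtain a r b s where e: "x = a # r" "y = b # s"
      using Cons sprod_list_arc_verts[OF xy] by metis
    from xy[unfolded e sprod_list_Cons_arcs]
    consider "(a, b) \<in> arcs A" "r = s" | "a = b" "(r, s) \<in> arcs (sprod_list As)" by blast
    then show ?thesis
    proof cases
      case 1
      have "a \<noteq> b" using wf_sgraph_irrefl[OF A 1(1)] .
      with sprod_list_arc_sgn[OF xy, of 0] show ?thesis unfolding e by (simp add: sprod_sgn)
    next
      case 2
      obtain k where k: "k < length As" "r ! k \<noteq> s ! k" using sprod_list_arc_neq[OF As 2(2)] .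
      have "sgn (sprod_list (A # As)) x y = sgn (As ! k) (r ! k) (s ! k)"
        using sprod_list_arc_sgn[OF xy, of "Suc k"] k unfolding e by simp
      with sprod_list_arc_sgn[OF 2(2) k] 2(1) show ?thesis unfolding e by (simp add: sprod_sgn)
    qed
  qed
qed

definition remove_nth :: "nat \<Rightarrow> 'a list \<Rightarrow> 'a list" where
  "remove_nth i xs = take i xs @ drop (Suc i) xs"

lemma remove_nth_Cons_0 [simp]: "remove_nth 0 (x # xs) = xs"
  by (simp add: remove_nth_def)

lemma remove_nth_Cons_Suc [simp]: "remove_nth (Suc i) (x # xs) = x # remove_nth i xs"
  by (simp add: remove_nth_def)

lemma mset_remove_nth: "i < length xs \<Longrightarrow> mset xs = add_mset (xs ! i) (mset (remove_nth i xs))"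
  unfolding remove_nth_def by (subst id_take_nth_drop) auto

lemma set_remove_nth_subset: "set (remove_nth i xs) \<subseteq> set xs"
  unfolding remove_nth_def using set_take_subset set_drop_subset by fastforce

lemma nth_in_remove_nth:
  "j < length xs \<Longrightarrow> j \<noteq> i \<Longrightarrow> xs ! j \<in> set (remove_nth i xs)"
proof (induction xs arbitrary: i j)
  case (Cons x xs)
  then show ?case by (cases i; cases j) auto
qed simp

text \<open>By induction on the list, moving the \<open>i\<close>-th factor past the head with the left
  commutativity of \<open>sprod\<close>.\<close>

lemma sprod_list_split_via:
  assumes "wf_sgraphs Gs" "i < length Gs"
  obtains \<phi> where "sequiv_via \<phi> {} (sprod_list Gs) (sprod (Gs ! i) (sprod_list (remove_nth i Gs)))"
    "\<And>x. x \<in> verts (sprod_list Gs) \<Longrightarrow> fst (\<phi> x) = x ! i"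
  using assms
proof (induction Gs arbitrary: i thesis)
  case (Cons A As)
  have A: "wf_sgraph A" and As: "wf_sgraphs As" using Cons.prems(2) by auto
  have hd: "hd x = x ! 0" if "x \<in> verts (sprod_list (A # As))" for x
    using sprod_list_vertsD(1)[OF that] by (cases x) auto
  show ?case
  proof (cases i)
    case 0
    then show ?thesis using Cons.prems(1) sprod_list_Cons_via[OF A As] hd by simp
  next
    case (Suc k)
    have k: "k < length As" using Cons.prems(3) Suc by simp
    obtain \<psi> where \<psi>: "sequiv_via \<psi> {} (sprod_list As) (sprod (As ! k) (sprod_list (remove_nth k As)))"
      and fst_\<psi>: "\<And>x. x \<in> verts (sprod_list As) \<Longrightarrow> fst (\<psi> x) = x ! k"
      using Cons.IH[OF _ As k] by blast
    let ?R = "sprod_list (remove_nth k As)" and ?split = "\<lambda>x. (hd x, tl x)"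
    have Ak: "wf_sgraph (As ! k)" and R: "wf_sgraphs (remove_nth k As)"
      using As k set_remove_nth_subset[of k As] by auto
    have AR: "wf_sgraph (sprod A ?R)" using wf_sprod[OF A wf_sprod_list[OF R]] .
    have "sequiv_via (map_prod id \<psi>) {} (sprod A (sprod_list As)) (sprod A (sprod (As ! k) ?R))"
      using sprod_via[OF A wf_sprod_list[OF As] sequiv_via_id \<psi>] by simp
    with sprod_list_Cons_via[OF A As]
    have "sequiv_via (map_prod id \<psi> \<circ> ?split) {} (sprod_list (A # As)) (sprod A (sprod (As ! k) ?R))"
      by (rule sequiv_via_comp_sign_preserving[OF closed_sprod_list])
    then have "sequiv_via ((\<lambda>(a, b, c). (b, a, c)) \<circ> (map_prod id \<psi> \<circ> ?split)) {}
        (sprod_list (A # As)) (sprod (As ! k) (sprod A ?R))"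
      using sprod_left_commute_via[OF A Ak] by (rule sequiv_via_comp_sign_preserving[OF closed_sprod_list])
    moreover obtain g where "sequiv_via g {} (sprod A ?R) (sprod_list (A # remove_nth k As))"
      using sequiv_via_inv[OF wf_sgraph_closed[OF AR] sprod_list_Cons_via[OF A R]] by auto
    then have "sequiv_via (map_prod id g) {} (sprod (As ! k) (sprod A ?R))
        (sprod (As ! k) (sprod_list (A # remove_nth k As)))"
      using sprod_via[OF Ak AR sequiv_via_id] by fastforce
    ultimately have "sequiv_via (map_prod id g \<circ> ((\<lambda>(a, b, c). (b, a, c)) \<circ> (map_prod id \<psi> \<circ> ?split))) {}
        (sprod_list (A # As)) (sprod (As ! k) (sprod_list (A # remove_nth k As)))"
      by (rule sequiv_via_comp_sign_preserving[OF closed_sprod_list])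
    moreover have "fst ((map_prod id g \<circ> ((\<lambda>(a, b, c). (b, a, c)) \<circ> (map_prod id \<psi> \<circ> ?split))) x) = x ! i"
      if "x \<in> verts (sprod_list (A # As))" for x
    proof -
      have x: "x = hd x # tl x" using sprod_list_vertsD(1)[OF that] by (cases x) auto
      then have "tl x \<in> verts (sprod_list As)" using that sprod_list_Cons_verts by metis
      then have "fst (\<psi> (tl x)) = x ! i" using fst_\<psi> Suc by (subst x) simp
      then show ?thesis by (auto split: prod.split)
    qed
    ultimately show ?thesis using Cons.prems(1) Suc by simp
  qed
qed simp

definition colayer :: "'v sgraph list \<Rightarrow> nat \<Rightarrow> 'v list \<Rightarrow> 'v list set" where
  "colayer Gs i v = {x \<in> verts (sprod_list Gs). x ! i = v ! i}"

lemma colayer_sequiv_remove_nth: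
  assumes Gs: "wf_sgraphs Gs" and i: "i < length Gs" and v: "v \<in> verts (sprod_list Gs)"
  shows "sequiv (induced (sprod_list Gs) (colayer Gs i v)) (sprod_list (remove_nth i Gs))"
proof -
  let ?R = "sprod_list (remove_nth i Gs)"
  obtain \<phi> where \<phi>: "sequiv_via \<phi> {} (sprod_list Gs) (sprod (Gs ! i) ?R)"
    and fst_\<phi>: "\<And>x. x \<in> verts (sprod_list Gs) \<Longrightarrow> fst (\<phi> x) = x ! i"
    using sprod_list_split_via[OF Gs i] by blast
  note b = sequiv_viaD(1)[OF \<phi>]
  have "\<phi> ` colayer Gs i v = {v ! i} \<times> verts ?R"
  proof
    show "\<phi> ` colayer Gs i v \<subseteq> {v ! i} \<times> verts ?R"
    proof
      fix y assume "y \<in> \<phi> ` colayer Gs i v"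
      then obtain x where x: "x \<in> verts (sprod_list Gs)" "x ! i = v ! i" "y = \<phi> x"
        unfolding colayer_def by blast
      then have "fst y = v ! i" "y \<in> verts (Gs ! i) \<times> verts ?R"
        using fst_\<phi> bij_betw_apply[OF b] by auto
      then show "y \<in> {v ! i} \<times> verts ?R" by (auto simp: mem_Times_iff)
    qed
    show "{v ! i} \<times> verts ?R \<subseteq> \<phi> ` colayer Gs i v"
    proof
      fix p assume p: "p \<in> {v ! i} \<times> verts ?R"
      have "v ! i \<in> verts (Gs ! i)" using sprod_list_vertsD(2)[OF v i] .
      with p have "p \<in> verts (sprod (Gs ! i) ?R)" by auto
      then obtain x where "x \<in> verts (sprod_list Gs)" "p = \<phi> x"
        unfolding bij_betw_imp_surj_on[OF b, symmetric] by blast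
      with p fst_\<phi> show "p \<in> \<phi> ` colayer Gs i v" unfolding colayer_def by force
    qed
  qed
  then have "sequiv (induced (sprod_list Gs) (colayer Gs i v)) (induced (sprod (Gs ! i) ?R) ({v ! i} \<times> verts ?R))"
    using sequivI[OF sequiv_via_induced[OF \<phi>, of "colayer Gs i v"]] unfolding colayer_def by auto
  moreover have "sequiv (induced (sprod (Gs ! i) ?R) ({v ! i} \<times> verts ?R)) ?R"
    using sequivI[OF sprod_slice_via[OF _ sprod_list_vertsD(2)[OF v i]]] Gs i by simp
  ultimately show ?thesis using sequiv_trans[OF closed_induced] by blast
qed

section \<open>Layers\<close>

definition layer :: "'v sgraph list \<Rightarrow> nat \<Rightarrow> 'v list \<Rightarrow> 'v list set" where
  "layer Gs i v = {x \<in> verts (sprod_list Gs). \<forall>k<length Gs. k \<noteq> i \<longrightarrow> x ! k = v ! k}"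

lemma layer_subset: "layer Gs i v \<subseteq> verts (sprod_list Gs)"
  unfolding layer_def by blast

lemma length_layer: "x \<in> layer Gs i v \<Longrightarrow> length x = length Gs"
  unfolding layer_def using sprod_list_vertsD(1) by blast

lemma layer_self: "v \<in> verts (sprod_list Gs) \<Longrightarrow> v \<in> layer Gs i v"
  unfolding layer_def by simp

lemma layer_eq: "y \<in> layer Gs i v \<Longrightarrow> layer Gs i y = layer Gs i v"
  unfolding layer_def by auto

lemma update_in_layer:
  "v \<in> verts (sprod_list Gs) \<Longrightarrow> i < length Gs \<Longrightarrow> a \<in> verts (Gs ! i) \<Longrightarrow> v[i := a] \<in> layer Gs i v"
  unfolding layer_def using sprod_list_update_vert by auto

lemma layer_eqI:
  assumes "x \<in> layer Gs i v" "y \<in> layer Gs i v" "x ! i = y ! i"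
  shows "x = y"
proof (rule nth_equalityI)
  show "length x = length y" using assms(1,2) length_layer by metis
  show "x ! k = y ! k" if "k < length x" for k
    using assms that length_layer[OF assms(1)] unfolding layer_def by (cases "k = i") auto
qed

lemma arc_in_layer_iff:
  assumes "wf_sgraphs Gs" "(p, q) \<in> arcs (sprod_list Gs)" "i < length Gs"
  shows "q \<in> layer Gs i p \<longleftrightarrow> p ! i \<noteq> q ! i"
proof -
  obtain r where r: "r < length Gs" "p ! r \<noteq> q ! r" using sprod_list_arc_neq[OF assms(1,2)] .
  have "q \<in> verts (sprod_list Gs)" using sprod_list_arc_verts[OF assms(2)] by blast
  note others = sprod_list_arc_at(2)[OF assms(2) r]
  show ?thesis
  proof (cases "r = i")
    case True
    with others \<open>q \<in> verts (sprod_list Gs)\<close> r show ?thesis unfolding layer_def by auto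
  next
    case False
    with others[OF assms(3)] r show ?thesis unfolding layer_def by auto
  qed
qed

lemma layer_via_factor:
  assumes Gs: "wf_sgraphs Gs" and i: "i < length Gs" and v: "v \<in> verts (sprod_list Gs)"
  shows "sequiv_via (\<lambda>x. x ! i) {} (induced (sprod_list Gs) (layer Gs i v)) (Gs ! i)"
proof (rule sequiv_via_emptyI)
  let ?L = "layer Gs i v"
  have "inj_on (\<lambda>x. x ! i) ?L" using layer_eqI by (rule inj_onI)
  moreover have "(\<lambda>x. x ! i) ` ?L = verts (Gs ! i)"
  proof
    show "(\<lambda>x. x ! i) ` ?L \<subseteq> verts (Gs ! i)"
      using layer_subset sprod_list_vertsD(2) i by blast
    show "verts (Gs ! i) \<subseteq> (\<lambda>x. x ! i) ` ?L"
    proof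
      fix a assume "a \<in> verts (Gs ! i)"
      with update_in_layer[OF v i] sprod_list_vertsD(1)[OF v] i
      show "a \<in> (\<lambda>x. x ! i) ` ?L" by (metis image_eqI nth_list_update_eq)
    qed
  qed
  ultimately show "bij_betw (\<lambda>x. x ! i) (verts (induced (sprod_list Gs) ?L)) (verts (Gs ! i))"
    by (simp add: bij_betw_def)
  show "(x, y) \<in> arcs (induced (sprod_list Gs) ?L) \<longleftrightarrow> (x ! i, y ! i) \<in> arcs (Gs ! i)"
    if xy: "x \<in> verts (induced (sprod_list Gs) ?L)" "y \<in> verts (induced (sprod_list Gs) ?L)" for x y
  proof -
    have others: "x ! k = y ! k" if "k < length Gs" "k \<noteq> i" for k
      using xy that unfolding layer_def by simp
    show ?thesis
    proof
      assume "(x, y) \<in> arcs (induced (sprod_list Gs) ?L)"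
      then show "(x ! i, y ! i) \<in> arcs (Gs ! i)"
        using sprod_list_arc_unique_index[OF Gs _ i others] by simp
    next
      assume "(x ! i, y ! i) \<in> arcs (Gs ! i)"
      then show "(x, y) \<in> arcs (induced (sprod_list Gs) ?L)"
        using xy sprod_list_arcsI[OF _ _ i _ others] layer_subset by auto
    qed
  qed
  show "sgn (Gs ! i) (x ! i) (y ! i) = sgn (induced (sprod_list Gs) ?L) x y"
    if xy: "(x, y) \<in> arcs (induced (sprod_list Gs) ?L)" for x y
  proof -
    have "(x, y) \<in> arcs (sprod_list Gs)" "x \<in> ?L" "y \<in> ?L" using xy by auto
    moreover have "x ! i \<noteq> y ! i"
    proof
      assume "x ! i = y ! i"
      with calculation(2,3) have "x = y" by (rule layer_eqI)
      with calculation(1) show False using wf_sgraph_irrefl[OF wf_sprod_list[OF Gs]] by blast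
    qed
    ultimately show ?thesis using sprod_list_arc_sgn[OF _ i] by simp
  qed
qed

lemma rtrancl_sprod_list_nth:
  assumes "(x, y) \<in> (arcs (sprod_list Gs))\<^sup>*" and i: "i < length Gs"
  shows "(x ! i, y ! i) \<in> (arcs (Gs ! i))\<^sup>*"
  using assms(1)
proof induction
  case (step y z)
  show ?case
  proof (cases "y ! i = z ! i")
    case False
    with sprod_list_arc_at(1)[OF step(2) i] step(3) show ?thesis by simp
  qed (use step(3) in simp)
qed simp

lemma sconnected_factor:
  assumes "sconnected (sprod_list Gs)" and i: "i < length Gs"
  shows "sconnected (Gs ! i)"
proof -
  obtain v where v: "v \<in> verts (sprod_list Gs)" using assms(1) unfolding sconnected_def by blast
  have "(a, b) \<in> (arcs (Gs ! i))\<^sup>*" if "a \<in> verts (Gs ! i)" "b \<in> verts (Gs ! i)" for a b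
  proof -
    have "(v[i := a], v[i := b]) \<in> (arcs (sprod_list Gs))\<^sup>*"
      using assms(1) sprod_list_update_vert[OF v i] that unfolding sconnected_def by blast
    from rtrancl_sprod_list_nth[OF this i] show ?thesis
      using sprod_list_vertsD(1)[OF v] i by simp
  qed
  moreover have "verts (Gs ! i) \<noteq> {}" using sprod_list_vertsD(2)[OF v i] by blast
  ultimately show ?thesis unfolding sconnected_def by blast
qed

lemma sconnected_layer:
  assumes Gs: "wf_sgraphs Gs" and i: "i < length Gs" and v: "v \<in> verts (sprod_list Gs)"
    and "sconnected (Gs ! i)"
  shows "sconnected (induced (sprod_list Gs) (layer Gs i v))"
proof -
  have G: "wf_sgraph (Gs ! i)" using Gs i by simp
  show ?thesis
    using sconnected_via[OF G assms(4) sequiv_via_inv[OF wf_sgraph_closed[OF G] layer_via_factor[OF Gs i v]]] .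
qed

lemma layer_common_neighbour:
  assumes i: "i < length Gs" and x: "x \<in> verts (sprod_list Gs)" "x \<notin> layer Gs i v"
    and yz: "y \<in> layer Gs i v" "z \<in> layer Gs i v"
    and a: "(x, y) \<in> arcs (sprod_list Gs)" "(x, z) \<in> arcs (sprod_list Gs)"
  shows "y = z"
proof -
  obtain k where k: "k < length Gs" "k \<noteq> i" "x ! k \<noteq> v ! k" using x unfolding layer_def by blast
  have "x ! k \<noteq> y ! k" "x ! k \<noteq> z ! k" using yz k unfolding layer_def by auto
  moreover have "i \<noteq> k" using k(2) by simp
  ultimately have "x ! i = y ! i" "x ! i = z ! i"
    using sprod_list_arc_at(2)[OF a(1) k(1), of i] sprod_list_arc_at(2)[OF a(2) k(1), of i] i
    by simp_all
  then have "y ! i = z ! i" by simp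
  with yz show ?thesis by (rule layer_eqI)
qed

lemma sconnected_arc_from:
  assumes G: "wf_sgraph G" "sconnected G" "arcs G \<noteq> {}" and a: "a \<in> verts G"
  obtains c where "(a, c) \<in> arcs G"
proof -
  obtain p q where pq: "(p, q) \<in> arcs G" using G(3) by auto
  then obtain b where b: "b \<in> verts G" "b \<noteq> a"
    using wf_sgraph_arc_verts[OF G(1) pq] wf_sgraph_irrefl[OF G(1) pq] by metis
  have "(a, b) \<in> (arcs G)\<^sup>*" using G(2) a b(1) unfolding sconnected_def by blast
  with b(2) show thesis using that by (auto elim: converse_rtranclE)
qed

lemma card_le_1_eq: "finite A \<Longrightarrow> card A \<le> 1 \<Longrightarrow> a \<in> A \<Longrightarrow> b \<in> A \<Longrightarrow> a = b"
  using card_le_Suc0_iff_eq[of A] by simp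

lemma card_ge_2E:
  assumes "2 \<le> card A"
  obtains a b where "a \<in> A" "b \<in> A" "a \<noteq> b"
proof -
  have fin: "finite A" using assms card.infinite by fastforce
  then have "\<not> card A \<le> Suc 0" using assms by simp
  then show thesis using that card_le_Suc0_iff_eq[OF fin] by blast
qed

lemma card_sprod_list_ge_2:
  assumes Gs: "wf_sgraphs Gs" and ne: "\<forall>G\<in>set Gs. verts G \<noteq> {}"
    and G: "G \<in> set Gs" "2 \<le> card (verts G)"
  shows "2 \<le> card (verts (sprod_list Gs))"
proof -
  obtain p where p: "p < length Gs" "Gs ! p = G" using G(1) by (auto simp: in_set_conv_nth)
  obtain a b where ab: "a \<in> verts G" "b \<in> verts G" "a \<noteq> b" using G(2) by (rule card_ge_2E)
  let ?x = "map (\<lambda>k. SOME c. c \<in> verts (Gs ! k)) [0..<length Gs]"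
  have x: "?x \<in> verts (sprod_list Gs)"
    using ne by (intro sprod_list_vertsI) (auto simp: some_in_eq)
  have "{?x[p := a], ?x[p := b]} \<subseteq> verts (sprod_list Gs)"
    using sprod_list_update_vert[OF x p(1)] ab p(2) by auto
  moreover have "finite (verts (sprod_list Gs))" using wf_sprod_list[OF Gs] unfolding wf_sgraph_def by blast
  ultimately have "card {?x[p := a], ?x[p := b]} \<le> card (verts (sprod_list Gs))" by (rule card_mono[rotated])
  moreover have "?x[p := a] \<noteq> ?x[p := b]" using ab(3) p(1) by (metis length_map length_upt minus_nat.diff_0 nth_list_update_eq)
  ultimately show ?thesis by simp
qed

lemma not_s_prime_two_nontrivial:
  assumes A: "wf_sgraph A" and Cs: "wf_sgraphs Cs" and ne: "\<forall>C\<in>set Cs. verts C \<noteq> {}"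
    and j: "j < length Cs" "j' < length Cs" "j \<noteq> j'"
    and card: "2 \<le> card (verts (Cs ! j))" "2 \<le> card (verts (Cs ! j'))"
    and eq: "sequiv A (sprod_list Cs)"
  shows "\<not> s_prime A"
proof -
  let ?R = "sprod_list (remove_nth j Cs)"
  have R: "wf_sgraphs (remove_nth j Cs)" using Cs set_remove_nth_subset[of j Cs] by auto
  have Cj: "wf_sgraph (Cs ! j)" using Cs j(1) by simp
  obtain \<phi> where "sequiv_via \<phi> {} (sprod_list Cs) (sprod (Cs ! j) ?R)"
    using sprod_list_split_via[OF Cs j(1)] by blast
  with eq have eq': "sequiv A (sprod (Cs ! j) ?R)"
    using sequiv_trans[OF wf_sgraph_closed[OF A]] sequivI by blast
  obtain H :: "nat sgraph" and f where H: "wf_sgraph H" "sequiv_via f {} (Cs ! j) H"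
    "card (verts H) = card (verts (Cs ! j))"
    using ex_nat_copy[OF Cj] by blast
  obtain K :: "nat sgraph" and g where K: "wf_sgraph K" "sequiv_via g {} ?R K"
    "card (verts K) = card (verts ?R)"
    using ex_nat_copy[OF wf_sprod_list[OF R]] by blast
  have "sequiv (sprod (Cs ! j) ?R) (sprod H K)"
    using sequivI[OF sprod_via[OF Cj wf_sprod_list[OF R] H(2) K(2)]] .
  with eq' have "sequiv A (sprod H K)" using sequiv_trans[OF wf_sgraph_closed[OF A]] by blast
  moreover have "2 \<le> card (verts K)"
    using card_sprod_list_ge_2[OF R] ne set_remove_nth_subset[of j Cs] nth_in_remove_nth[OF j(2) j(3)[symmetric]]
      card(2) K(3) by auto
  ultimately show ?thesis unfolding s_prime_def using H(1,3) K(1) card(1) by (metis (no_types))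
qed

lemma list_induct_updates:
  assumes len: "length v = length x" and base: "P v"
    and step: "\<And>m w. m < length x \<Longrightarrow> length w = length x \<Longrightarrow> P w \<Longrightarrow> P (w[m := x ! m])"
  shows "P x"
proof -
  have "P (take m x @ drop m v)" if "m \<le> length x" for m
    using that
  proof (induction m)
    case 0
    then show ?case using base by simp
  next
    case (Suc m)
    then have m: "m < length x" by simp
    have "(take m x @ drop m v)[m := x ! m] = take (Suc m) x @ drop (Suc m) v"
      using m len by (simp add: list_update_append take_Suc_conv_app_nth flip: Cons_nth_drop_Suc)
    with step[OF m _ Suc.IH] m len show ?case by simp
  qed
  from this[of "length x"] show ?thesis using len by simp
qed

definition colayer_arcs :: "'v sgraph list \<Rightarrow> nat \<Rightarrow> ('v list \<times> 'v list) set" where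
  "colayer_arcs Gs i = {(y, z). (y, z) \<in> arcs (sprod_list Gs) \<and> y ! i = z ! i}"

lemma colayer_eq_rtrancl:
  assumes Gs: "wf_sgraphs Gs" and conn: "\<forall>G\<in>set Gs. sconnected G"
    and i: "i < length Gs" and v: "v \<in> verts (sprod_list Gs)"
  shows "colayer Gs i v = {x. (v, x) \<in> (colayer_arcs Gs i)\<^sup>*}"
proof
  show "{x. (v, x) \<in> (colayer_arcs Gs i)\<^sup>*} \<subseteq> colayer Gs i v"
  proof
    fix x assume "x \<in> {x. (v, x) \<in> (colayer_arcs Gs i)\<^sup>*}"
    then have "(v, x) \<in> (colayer_arcs Gs i)\<^sup>*" by simp
    then show "x \<in> colayer Gs i v"
      by induction (use v in \<open>auto simp: colayer_def colayer_arcs_def dest: sprod_list_arc_verts\<close>)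
  qed
  show "colayer Gs i v \<subseteq> {x. (v, x) \<in> (colayer_arcs Gs i)\<^sup>*}"
  proof
    fix x assume "x \<in> colayer Gs i v"
    then have x: "x \<in> verts (sprod_list Gs)" "x ! i = v ! i" unfolding colayer_def by auto
    have n: "length x = length Gs" using sprod_list_vertsD(1)[OF x(1)] .
    have "x \<in> colayer Gs i v \<and> (v, x) \<in> (colayer_arcs Gs i)\<^sup>*"
    proof (rule list_induct_updates[where P = "\<lambda>w. w \<in> colayer Gs i v \<and> (v, w) \<in> (colayer_arcs Gs i)\<^sup>*"])
      show "length v = length x" using sprod_list_vertsD(1)[OF v] n by simp
      show "v \<in> colayer Gs i v \<and> (v, v) \<in> (colayer_arcs Gs i)\<^sup>*" using v unfolding colayer_def by simp
    next
      fix m w assume m: "m < length x" and "length w = length x"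
        and w: "w \<in> colayer Gs i v \<and> (v, w) \<in> (colayer_arcs Gs i)\<^sup>*"
      have m': "m < length Gs" using m n by simp
      have wV: "w \<in> verts (sprod_list Gs)" and wi: "w ! i = v ! i" using w unfolding colayer_def by auto
      have xm: "x ! m \<in> verts (Gs ! m)" using sprod_list_vertsD(2)[OF x(1) m'] .
      show "w[m := x ! m] \<in> colayer Gs i v \<and> (v, w[m := x ! m]) \<in> (colayer_arcs Gs i)\<^sup>*"
      proof (cases "m = i")
        case True
        then have "w[m := x ! m] = w" using wi x(2) by (metis list_update_id)
        with w show ?thesis by simp
      next
        case False
        let ?L = "layer Gs m w"
        have "sconnected (induced (sprod_list Gs) ?L)"
          using sconnected_layer[OF Gs m' wV] conn m' by simp
        moreover have "w \<in> ?L" "w[m := x ! m] \<in> ?L"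
          using layer_self[OF wV] update_in_layer[OF wV m' xm] .
        ultimately have "(w, w[m := x ! m]) \<in> (arcs (sprod_list Gs) \<inter> ?L \<times> ?L)\<^sup>*"
          unfolding sconnected_def by simp
        moreover have "arcs (sprod_list Gs) \<inter> ?L \<times> ?L \<subseteq> colayer_arcs Gs i"
          using False i unfolding layer_def colayer_arcs_def by auto
        ultimately have "(w, w[m := x ! m]) \<in> (colayer_arcs Gs i)\<^sup>*"
          using rtrancl_mono by blast
        moreover have "w[m := x ! m] \<in> colayer Gs i v"
          using sprod_list_update_vert[OF wV m' xm] wi False unfolding colayer_def by simp
        ultimately show ?thesis using w by (meson rtrancl_trans)
      qed
    qed
    then show "x \<in> {x. (v, x) \<in> (colayer_arcs Gs i)\<^sup>*}" by simp
  qed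
qed

section \<open>Boxes\<close>

definition common_neighbour_closed :: "'v sgraph \<Rightarrow> 'v set \<Rightarrow> bool" where
  "common_neighbour_closed G S \<longleftrightarrow>
     (\<forall>x\<in>verts G. \<forall>y\<in>S. \<forall>z\<in>S. y \<noteq> z \<longrightarrow> (y, x) \<in> arcs G \<longrightarrow> (z, x) \<in> arcs G \<longrightarrow> x \<in> S)"

definition box :: "'v sgraph list \<Rightarrow> (nat \<Rightarrow> 'v set) \<Rightarrow> 'v list set" where
  "box Gs U = {z \<in> verts (sprod_list Gs). \<forall>k<length Gs. z ! k \<in> U k}"

lemma box_via:
  assumes Gs: "wf_sgraphs Gs" and U: "\<And>k. k < length Gs \<Longrightarrow> U k \<subseteq> verts (Gs ! k)"
  shows "sequiv_via id {} (induced (sprod_list Gs) (box Gs U))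
           (sprod_list (map (\<lambda>k. induced (Gs ! k) (U k)) [0..<length Gs]))"
proof -
  let ?Cs = "map (\<lambda>k. induced (Gs ! k) (U k)) [0..<length Gs]" and ?B = "induced (sprod_list Gs) (box Gs U)"
  have V: "verts (sprod_list ?Cs) = box Gs U"
    using U by (auto simp: box_def sprod_list_verts)
  have arc: "(x, y) \<in> arcs ?B \<longleftrightarrow> (x, y) \<in> arcs (sprod_list ?Cs)" for x y
    using V by (auto simp: box_def sprod_list_arcs)
  show ?thesis
  proof (rule sequiv_via_emptyI)
    show "bij_betw id (verts ?B) (verts (sprod_list ?Cs))" using V by simp
    show "sgn (sprod_list ?Cs) (id x) (id y) = sgn ?B x y" if xy: "(x, y) \<in> arcs ?B" for x y
    proof -
      have a: "(x, y) \<in> arcs (sprod_list Gs)" using xy by simp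
      obtain p where p: "p < length Gs" "x ! p \<noteq> y ! p" using sprod_list_arc_neq[OF Gs a] .
      from xy[unfolded arc] have "sgn (sprod_list ?Cs) x y = sgn (Gs ! p) (x ! p) (y ! p)"
        using sprod_list_arc_sgn[of x y ?Cs p] p by simp
      with sprod_list_arc_sgn[OF a p] show ?thesis by simp
    qed
  qed (use arc in auto)
qed

definition dir_arcs :: "'v sgraph list \<Rightarrow> 'v list set \<Rightarrow> nat \<Rightarrow> ('v list \<times> 'v list) set" where
  "dir_arcs Gs S k = {(p, q). (p, q) \<in> arcs (sprod_list Gs) \<and> p \<in> S \<and> q \<in> S \<and> q \<in> layer Gs k p}"

lemma dir_arcs_rtrancl_in: "(a, b) \<in> (dir_arcs Gs S k)\<^sup>* \<Longrightarrow> a \<in> S \<Longrightarrow> b \<in> S"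
  by (induction rule: rtrancl_induct) (auto simp: dir_arcs_def)

lemma common_neighbour_closed_square:
  assumes Gs: "wf_sgraphs Gs" and S: "S \<subseteq> verts (sprod_list Gs)"
    and cl: "common_neighbour_closed (sprod_list Gs) S"
    and x: "x \<in> S" "(x, q) \<in> arcs (sprod_list Gs)" "q \<in> layer Gs l x" and l: "l < length Gs"
    and q: "(q, q') \<in> dir_arcs Gs S k" and k: "k < length Gs" "k \<noteq> l"
  shows "(x, x[k := q' ! k]) \<in> dir_arcs Gs S k \<and> (x[k := q' ! k], q') \<in> arcs (sprod_list Gs)
    \<and> q' \<in> layer Gs l (x[k := q' ! k])"
proof -
  let ?P = "sprod_list Gs" and ?x' = "x[k := q' ! k]"
  have qq': "(q, q') \<in> arcs ?P" "q \<in> S" "q' \<in> S" "q' \<in> layer Gs k q"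
    using q unfolding dir_arcs_def by auto
  have xV: "x \<in> verts ?P" and q'V: "q' \<in> verts ?P" using x(1) qq'(3) S by auto
  have len: "length x = length Gs" using sprod_list_vertsD(1)[OF xV] .
  have q'_eq: "q' ! m = q ! m" if "m < length Gs" "m \<noteq> k" for m
    using qq'(4) that unfolding layer_def by simp
  have q_eq: "q ! m = x ! m" if "m < length Gs" "m \<noteq> l" for m
    using x(3) that unfolding layer_def by simp
  have arc_k: "(x ! k, q' ! k) \<in> arcs (Gs ! k)"
    using sprod_list_arc_unique_index[OF Gs qq'(1) k(1)] q'_eq q_eq[OF k] by simp
  have arc_l: "(x ! l, q ! l) \<in> arcs (Gs ! l)"
    using sprod_list_arc_unique_index[OF Gs x(2) l] q_eq by simp
  have x'V: "?x' \<in> verts ?P"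
    using sprod_list_update_vert[OF xV k(1) sprod_list_vertsD(2)[OF q'V k(1)]] .
  have a1: "(x, ?x') \<in> arcs ?P"
    using arc_k len k(1) by (intro sprod_list_arcsI[OF xV x'V k(1)]) auto
  have "q' ! m = ?x' ! m" if "m < length Gs" "m \<noteq> l" for m
  proof (cases "m = k")
    case False
    with q'_eq[OF that(1)] q_eq[OF that] show ?thesis by simp
  qed (use len k in simp)
  then have q'_layer: "q' \<in> layer Gs l ?x'" unfolding layer_def using q'V by auto
  have a2: "(?x', q') \<in> arcs ?P"
  proof (rule sprod_list_arcsI[OF x'V q'V l])
    show "(?x' ! l, q' ! l) \<in> arcs (Gs ! l)" using arc_l q'_eq[OF l] k(2) by simp
    show "?x' ! j = q' ! j" if "j < length Gs" "j \<noteq> l" for j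
      using q'_layer that unfolding layer_def by simp
  qed
  have "x \<noteq> q'"
  proof
    assume "x = q'"
    with q'_eq[OF l] k(2) have "x ! l = q ! l" by simp
    with arc_l wf_sgraph_no_loop[of "Gs ! l"] Gs l show False by simp
  qed
  then have "?x' \<in> S"
    using cl x'V x(1) qq'(3) a1 wf_sgraph_sym[OF wf_sprod_list[OF Gs] a2]
    unfolding common_neighbour_closed_def by blast
  then have "(x, ?x') \<in> dir_arcs Gs S k"
    unfolding dir_arcs_def layer_def using a1 x(1) x'V k(1) by simp
  with a2 q'_layer show ?thesis by blast
qed

text \<open>Moving a path in direction \<open>k\<close> across an arc in direction \<open>l \<noteq> k\<close>: each step closes a
  square, whose fourth corner is a common neighbour of two vertices of \<open>S\<close>.\<close>

lemma dir_arcs_transport: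
  assumes Gs: "wf_sgraphs Gs" and S: "S \<subseteq> verts (sprod_list Gs)"
    and cl: "common_neighbour_closed (sprod_list Gs) S"
    and x: "x \<in> S" and a: "(x, x1) \<in> arcs (sprod_list Gs)" and l: "l < length Gs" "x1 \<in> layer Gs l x"
    and k: "k < length Gs" "k \<noteq> l"
    and r: "(x1, q) \<in> (dir_arcs Gs S k)\<^sup>*"
  shows "(x, x[k := q ! k]) \<in> (dir_arcs Gs S k)\<^sup>* \<and> x[k := q ! k] \<in> S
    \<and> (x[k := q ! k], q) \<in> arcs (sprod_list Gs) \<and> q \<in> layer Gs l (x[k := q ! k])"
  using r
proof (induction rule: rtrancl_induct)
  case base
  have "x1 ! k = x ! k" using l(2) k unfolding layer_def by simp
  then have "x[k := x1 ! k] = x" by simp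
  with x a l(2) show ?case by simp
next
  case (step q q')
  then have "x[k := q ! k] \<in> S" "(x[k := q ! k], q) \<in> arcs (sprod_list Gs)" "q \<in> layer Gs l (x[k := q ! k])"
    by auto
  from common_neighbour_closed_square[OF Gs S cl this l(1) step.hyps(2) k]
  have "(x[k := q ! k], x[k := q' ! k]) \<in> dir_arcs Gs S k \<and> (x[k := q' ! k], q') \<in> arcs (sprod_list Gs)
      \<and> q' \<in> layer Gs l (x[k := q' ! k])"
    by simp
  with step.IH show ?case unfolding dir_arcs_def by (auto intro: rtrancl_into_rtrancl)
qed

lemma common_neighbour_closed_update:
  assumes Gs: "wf_sgraphs Gs" and S: "S \<subseteq> verts (sprod_list Gs)"
    and conn: "sconnected (induced (sprod_list Gs) S)"
    and cl: "common_neighbour_closed (sprod_list Gs) S"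
    and x: "x \<in> S" and y: "y \<in> S" and k: "k < length Gs"
  shows "x[k := y ! k] \<in> S"
proof -
  have "(x, y) \<in> (arcs (sprod_list Gs) \<inter> S \<times> S)\<^sup>*" using conn x y unfolding sconnected_def by simp
  then have "\<forall>k<length Gs. (x, x[k := y ! k]) \<in> (dir_arcs Gs S k)\<^sup>*"
  proof (induction rule: converse_rtrancl_induct)
    case (step x x1)
    have a: "(x, x1) \<in> arcs (sprod_list Gs)" "x \<in> S" "x1 \<in> S" using step.hyps(1) by auto
    obtain l where l: "l < length Gs" "x1 \<in> layer Gs l x"
      using a(1) unfolding layer_def by (auto elim!: sprod_list_arcsE)
    have len: "length x = length Gs" "length x1 = length Gs"
      using a(2,3) S sprod_list_vertsD(1) by blast+
    show ?case
    proof (intro allI impI)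
      fix k assume k: "k < length Gs"
      have r: "(x1, x1[k := y ! k]) \<in> (dir_arcs Gs S k)\<^sup>*" using step.IH k by blast
      show "(x, x[k := y ! k]) \<in> (dir_arcs Gs S k)\<^sup>*"
      proof (cases "k = l")
        case True
        have "x1[k := y ! k] = x[k := y ! k]"
        proof (rule nth_equalityI)
          show "x1[k := y ! k] ! i = x[k := y ! k] ! i" if "i < length (x1[k := y ! k])" for i
            using l(2) len True that unfolding layer_def by (cases "i = l") auto
        qed (use len in simp)
        moreover have "(x, x1) \<in> dir_arcs Gs S k" unfolding dir_arcs_def using a l True by simp
        ultimately show ?thesis using r by (metis converse_rtrancl_into_rtrancl)
      next
        case False
        from dir_arcs_transport[OF Gs S cl a(2) a(1) l k False r] show ?thesis
          using len k by simp
      qed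
    qed
  qed simp
  then show ?thesis using dir_arcs_rtrancl_in x k by blast
qed

lemma common_neighbour_closed_eq_box:
  assumes Gs: "wf_sgraphs Gs" and S: "S \<subseteq> verts (sprod_list Gs)"
    and conn: "sconnected (induced (sprod_list Gs) S)"
    and cl: "common_neighbour_closed (sprod_list Gs) S"
  shows "S = box Gs (\<lambda>k. (\<lambda>y. y ! k) ` S)"
proof
  show "S \<subseteq> box Gs (\<lambda>k. (\<lambda>y. y ! k) ` S)" using S unfolding box_def by blast
  show "box Gs (\<lambda>k. (\<lambda>y. y ! k) ` S) \<subseteq> S"
  proof
    fix z assume z: "z \<in> box Gs (\<lambda>k. (\<lambda>y. y ! k) ` S)"
    obtain x0 where x0: "x0 \<in> S" using conn unfolding sconnected_def by auto
    have len: "length z = length Gs" using z sprod_list_vertsD(1) unfolding box_def by blast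
    show "z \<in> S"
    proof (rule list_induct_updates[where P = "\<lambda>w. w \<in> S"])
      show "length x0 = length z" using x0 S len sprod_list_vertsD(1) by auto
      show "w[m := z ! m] \<in> S" if m: "m < length z" and w: "w \<in> S" for m w
      proof -
        obtain y where "y \<in> S" "z ! m = y ! m" using z m len unfolding box_def by auto
        with common_neighbour_closed_update[OF Gs S conn cl w] m len show ?thesis by simp
      qed
    qed (use x0 in simp)
  qed
qed

section \<open>Layers of prime factors\<close>

lemma prime_box_in_layer:
  assumes Bs: "wf_sgraphs Bs" and U: "\<And>k. k < length Bs \<Longrightarrow> U k \<subseteq> verts (Bs ! k)"
    and A: "s_prime A" and eq: "sequiv A (induced (sprod_list Bs) (box Bs U))"
    and y: "y \<in> box Bs U" "y' \<in> box Bs U" "y \<noteq> y'"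
  obtains j where "j < length Bs" "box Bs U \<subseteq> layer Bs j y"
proof -
  let ?Cs = "map (\<lambda>k. induced (Bs ! k) (U k)) [0..<length Bs]"
  have wA: "wf_sgraph A" using A unfolding s_prime_def by blast
  have eq': "sequiv A (sprod_list ?Cs)"
    using sequiv_trans[OF wf_sgraph_closed[OF wA] eq sequivI[OF box_via[OF Bs U]]] .
  have Cs: "wf_sgraphs ?Cs" using Bs U by (auto intro!: wf_induced dest: subsetD[OF U])
  have yk: "y ! k \<in> U k" "y' ! k \<in> U k" if "k < length Bs" for k
    using y that unfolding box_def by auto
  have ne: "\<forall>C\<in>set ?Cs. verts C \<noteq> {}" using yk(1) by fastforce
  have fin: "finite (U k)" if "k < length Bs" for k
    using U[OF that] Bs that unfolding wf_sgraph_def by (meson finite_subset nth_mem)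
  have at_most_one: "card (U k) \<le> 1" if "j < length Bs" "k < length Bs" "j \<noteq> k" "2 \<le> card (U j)" for j k
  proof (rule ccontr)
    assume "\<not> card (U k) \<le> 1"
    then have "\<not> s_prime A"
      using not_s_prime_two_nontrivial[OF wA Cs ne, of j k] that eq' by simp
    with A show False by contradiction
  qed
  have "\<exists>j<length Bs. 2 \<le> card (U j)"
  proof (rule ccontr)
    assume "\<not> ?thesis"
    then have "card (U k) \<le> 1" if "k < length Bs" for k using that by force
    then have "y ! k = y' ! k" if "k < length Bs" for k
      using card_le_1_eq[OF fin] yk that by blast
    moreover have "length y = length Bs" "length y' = length Bs"
      using y sprod_list_vertsD(1) unfolding box_def by auto
    ultimately show False using y(3) nth_equalityI by metis
  qed
  then obtain j where j: "j < length Bs" "2 \<le> card (U j)" by blast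
  have "z \<in> layer Bs j y" if z: "z \<in> box Bs U" for z
  proof -
    have "z ! k = y ! k" if "k < length Bs" "k \<noteq> j" for k
      using card_le_1_eq[OF fin at_most_one[OF j(1) that(1) _ j(2)]] z yk that
      unfolding box_def by auto
    with z show ?thesis unfolding box_def layer_def by auto
  qed
  with j show thesis using that by blast
qed

lemma layer_image_eq_box:
  assumes As: "wf_sgraphs As" and Bs: "wf_sgraphs Bs"
    and h: "sequiv_via h S (sprod_list As) (sprod_list Bs)"
    and i: "i < length As" "sconnected (As ! i)" and v: "v \<in> verts (sprod_list As)"
  shows "h ` layer As i v = box Bs (\<lambda>k. (\<lambda>y. y ! k) ` h ` layer As i v)"
proof (rule common_neighbour_closed_eq_box[OF Bs])
  let ?P = "sprod_list As" and ?Q = "sprod_list Bs" and ?L = "layer As i v"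
  note arc = sequiv_viaD(3)[OF h]
  have surj: "h ` verts ?P = verts ?Q" using bij_betw_imp_surj_on[OF sequiv_viaD(1)[OF h]] .
  show "h ` ?L \<subseteq> verts ?Q" using layer_subset surj by blast
  show "sconnected (induced ?Q (h ` ?L))"
    using sconnected_via[OF wf_induced[OF wf_sprod_list[OF As] layer_subset]
        sconnected_layer[OF As i(1) v i(2)] sequiv_via_induced[OF h layer_subset]] .
  show "common_neighbour_closed ?Q (h ` ?L)"
    unfolding common_neighbour_closed_def
  proof (intro ballI impI)
    fix x y z assume x: "x \<in> verts ?Q" and yz: "y \<in> h ` ?L" "z \<in> h ` ?L" "y \<noteq> z"
      and a: "(y, x) \<in> arcs ?Q" "(z, x) \<in> arcs ?Q"
    obtain x' where x': "x' \<in> verts ?P" "x = h x'" using x surj by blast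
    obtain y' z' where yz': "y' \<in> ?L" "z' \<in> ?L" "y = h y'" "z = h z'" using yz(1,2) by blast
    have "(y', x') \<in> arcs ?P" "(z', x') \<in> arcs ?P"
      using arc x' yz' a layer_subset by blast+
    then have "(x', y') \<in> arcs ?P" "(x', z') \<in> arcs ?P"
      using wf_sgraph_sym[OF wf_sprod_list[OF As]] by blast+
    with layer_common_neighbour[OF i(1) x'(1) _ yz'(1,2)] have "x' \<in> ?L" using yz' yz(3) by blast
    with x' show "x \<in> h ` ?L" by blast
  qed
qed

lemma prime_layer_image_subset:
  assumes As: "wf_sgraphs As" and Bs: "wf_sgraphs Bs"
    and h: "sequiv_via h S (sprod_list As) (sprod_list Bs)"
    and i: "i < length As" and prime: "s_prime (As ! i)" "sconnected (As ! i)" "arcs (As ! i) \<noteq> {}"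
    and v: "v \<in> verts (sprod_list As)"
  obtains j where "j < length Bs" "h ` layer As i v \<subseteq> layer Bs j (h v)"
proof -
  let ?P = "sprod_list As" and ?Q = "sprod_list Bs" and ?L = "layer As i v"
  let ?U = "\<lambda>k. (\<lambda>y. y ! k) ` h ` ?L"
  have inj: "inj_on h (verts ?P)" using bij_betw_imp_inj_on[OF sequiv_viaD(1)[OF h]] .
  have Ai: "wf_sgraph (As ! i)" using As i by simp
  have box: "h ` ?L = box Bs ?U" using layer_image_eq_box[OF As Bs h i prime(2) v] .
  have U: "?U k \<subseteq> verts (Bs ! k)" if "k < length Bs" for k
    using box that sprod_list_vertsD(2) unfolding box_def by blast
  have "sequiv (As ! i) (induced ?Q (h ` ?L))"
    using sequiv_trans[OF wf_sgraph_closed[OF Ai]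
        sequiv_sym[OF wf_sgraph_closed[OF Ai] sequivI[OF layer_via_factor[OF As i v]]]
        sequivI[OF sequiv_via_induced[OF h layer_subset]]] .
  then have eq: "sequiv (As ! i) (induced ?Q (box Bs ?U))" using box by simp
  obtain c where c: "(v ! i, c) \<in> arcs (As ! i)"
    using sconnected_arc_from[OF Ai prime(2,3) sprod_list_vertsD(2)[OF v i]] .
  have vc: "v[i := c] \<in> ?L"
    using update_in_layer[OF v i] wf_sgraph_arc_verts[OF Ai c] by blast
  have "v[i := c] \<noteq> v"
    using wf_sgraph_irrefl[OF Ai c] sprod_list_vertsD(1)[OF v] i by (metis nth_list_update_eq)
  then have "h (v[i := c]) \<noteq> h v" using inj vc layer_subset v by (meson inj_onD subsetD)
  moreover have "h v \<in> box Bs ?U" "h (v[i := c]) \<in> box Bs ?U"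
    using box layer_self[OF v] vc by blast+
  ultimately obtain j where "j < length Bs" "box Bs ?U \<subseteq> layer Bs j (h v)"
    using prime_box_in_layer[OF Bs U prime(1) eq] by metis
  with box that show thesis by simp
qed

definition connected_prime_factors :: "'v sgraph list \<Rightarrow> bool" where
  "connected_prime_factors Gs \<longleftrightarrow> (\<forall>G\<in>set Gs. s_prime G \<and> sconnected G \<and> arcs G \<noteq> {})"

lemma connected_prime_factorsD:
  assumes "connected_prime_factors Gs"
  shows "wf_sgraphs Gs"
    and "\<And>i. i < length Gs \<Longrightarrow> s_prime (Gs ! i) \<and> sconnected (Gs ! i) \<and> arcs (Gs ! i) \<noteq> {}"
  using assms unfolding connected_prime_factors_def s_prime_def by auto

lemma prime_layer_image_eq:
  assumes As: "connected_prime_factors As" and Bs: "connected_prime_factors Bs"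
    and h: "sequiv_via h S (sprod_list As) (sprod_list Bs)"
    and i: "i < length As" and v: "v \<in> verts (sprod_list As)"
  obtains j where "j < length Bs" "h ` layer As i v = layer Bs j (h v)"
proof -
  let ?P = "sprod_list As" and ?Q = "sprod_list Bs" and ?g = "inv_into (verts (sprod_list As)) h"
  note wA = connected_prime_factorsD(1)[OF As] and wB = connected_prime_factorsD(1)[OF Bs]
  note b = sequiv_viaD(1)[OF h]
  have inj: "inj_on h (verts ?P)" and surj: "h ` verts ?P = verts ?Q"
    using b by (auto simp: bij_betw_def)
  have hv: "h v \<in> verts ?Q" using v surj by blast
  have gh: "?g (h x) = x" if "x \<in> verts ?P" for x using inv_into_f_f[OF inj that] .
  have hg: "h (?g y) = y" if "y \<in> verts ?Q" for y using f_inv_into_f[of y h] surj that by simp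
  obtain j where j: "j < length Bs" "h ` layer As i v \<subseteq> layer Bs j (h v)"
    using prime_layer_image_subset[OF wA wB h i _ _ _ v] connected_prime_factorsD(2)[OF As i] by blast
  obtain i' where i': "i' < length As" "?g ` layer Bs j (h v) \<subseteq> layer As i' (?g (h v))"
    using prime_layer_image_subset[OF wB wA sequiv_via_inv[OF closed_sprod_list h] j(1) _ _ _ hv]
      connected_prime_factorsD(2)[OF Bs j(1)] by blast
  have g_layer: "?g ` layer Bs j (h v) \<subseteq> layer As i' v" using i'(2) gh[OF v] by simp
  have "i' = i"
  proof (rule ccontr)
    assume "i' \<noteq> i"
    have Ai: "wf_sgraph (As ! i)" using wA i by simp
    obtain c where c: "(v ! i, c) \<in> arcs (As ! i)"
      using sconnected_arc_from[OF Ai _ _ sprod_list_vertsD(2)[OF v i]]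
        connected_prime_factorsD(2)[OF As i] by blast
    have vc: "v[i := c] \<in> layer As i v"
      using update_in_layer[OF v i] wf_sgraph_arc_verts[OF Ai c] by blast
    then have "?g (h (v[i := c])) \<in> layer As i' v" using g_layer j(2) by blast
    then have "v[i := c] ! i = v ! i"
      using gh layer_subset vc \<open>i' \<noteq> i\<close> i unfolding layer_def by auto
    with wf_sgraph_irrefl[OF Ai c] i sprod_list_vertsD(1)[OF v] show False by simp
  qed
  have "layer Bs j (h v) \<subseteq> h ` layer As i v"
  proof
    fix y assume y: "y \<in> layer Bs j (h v)"
    then have "?g y \<in> layer As i v" using g_layer \<open>i' = i\<close> by blast
    with hg[OF subsetD[OF layer_subset y]] show "y \<in> h ` layer As i v" by force
  qed
  with j that show thesis by blast
qed

lemma square_completion: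
  assumes Gs: "wf_sgraphs Gs" and ab: "a < length Gs" "b < length Gs" "a \<noteq> b"
    and u: "u \<in> verts (sprod_list Gs)" and y: "y \<in> layer Gs a u" "y \<noteq> u" and z: "z \<in> layer Gs b u" "z \<noteq> u"
    and x: "(y, x) \<in> arcs (sprod_list Gs)" "(z, x) \<in> arcs (sprod_list Gs)" "x \<noteq> u"
  shows "x \<in> layer Gs a z"
proof -
  have xV: "x \<in> verts (sprod_list Gs)" using sprod_list_arc_verts[OF x(1)] by simp
  have ya: "y ! a \<noteq> u ! a" using layer_eqI[OF y(1) layer_self[OF u]] y(2) by blast
  have zb: "z ! b \<noteq> u ! b" using layer_eqI[OF z(1) layer_self[OF u]] z(2) by blast
  have za: "z ! a = u ! a" using z(1) ab unfolding layer_def by simp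
  have "y ! a = x ! a"
  proof (rule ccontr)
    assume "y ! a \<noteq> x ! a"
    with sprod_list_arc_at(2)[OF x(1) ab(1)] y(1) have "x \<in> layer Gs a u"
      using xV unfolding layer_def by auto
    with layer_eqI[OF _ layer_self[OF u]] x(3) have "x ! a \<noteq> u ! a" by blast
    moreover have "x ! b = u ! b" using \<open>x \<in> layer Gs a u\<close> ab unfolding layer_def by simp
    with zb have "z ! a = x ! a" using sprod_list_arc_at(2)[OF x(2) ab(2)] ab by simp
    ultimately show False using za by simp
  qed
  with ya za have "z ! a \<noteq> x ! a" by simp
  with sprod_list_arc_at(2)[OF x(2) ab(1)] xV show ?thesis unfolding layer_def by auto
qed

lemma layer_inter:
  assumes "x \<in> layer Gs j z" "x \<in> layer Gs j' z" "j < length Gs" "j \<noteq> j'"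
    and "z \<in> verts (sprod_list Gs)"
  shows "x = z"
proof -
  have "x ! j = z ! j" using assms(2-4) unfolding layer_def by simp
  with assms(1) layer_self[OF assms(5)] show ?thesis by (rule layer_eqI)
qed

lemma layer_square:
  assumes As: "wf_sgraphs As" and i: "i < length As"
    and vw: "(v, w) \<in> arcs (sprod_list As)" "w \<notin> layer As i v"
    and c: "(v ! i, c) \<in> arcs (As ! i)"
  shows "v[i := c] \<in> layer As i v" "w[i := c] \<in> layer As i w"
    "v[i := c] \<noteq> v" "w[i := c] \<noteq> v" "w[i := c] \<noteq> w"
    "(v[i := c], w[i := c]) \<in> arcs (sprod_list As)" "(w, w[i := c]) \<in> arcs (sprod_list As)"
proof -
  let ?P = "sprod_list As"
  have Ai: "wf_sgraph (As ! i)" using As i by simp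
  have v: "v \<in> verts ?P" and w: "w \<in> verts ?P" using sprod_list_arc_verts[OF vw(1)] by auto
  have len: "length v = length As" "length w = length As"
    using sprod_list_vertsD(1) v w by auto
  have vwi: "v ! i = w ! i" using arc_in_layer_iff[OF As vw(1) i] vw(2) by simp
  obtain k where k: "k < length As" "(v ! k, w ! k) \<in> arcs (As ! k)"
    "\<And>m. m < length As \<Longrightarrow> m \<noteq> k \<Longrightarrow> v ! m = w ! m"
    using vw(1) by (rule sprod_list_arcsE) blast
  have vwk: "v ! k \<noteq> w ! k" using wf_sgraph_irrefl[of "As ! k"] As k(1,2) by simp
  with vwi have ki: "k \<noteq> i" by auto
  have cV: "c \<in> verts (As ! i)" and cv: "c \<noteq> v ! i"
    using wf_sgraph_arc_verts[OF Ai c] wf_sgraph_irrefl[OF Ai c] by auto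
  show x: "v[i := c] \<in> layer As i v" and x': "w[i := c] \<in> layer As i w"
    using update_in_layer[OF v i cV] update_in_layer[OF w i cV] .
  show "v[i := c] \<noteq> v" "w[i := c] \<noteq> w" using cv vwi i len by (metis nth_list_update_eq)+
  show "w[i := c] \<noteq> v" using vwk ki len by (metis nth_list_update_neq)
  have xV: "v[i := c] \<in> verts ?P" and x'V: "w[i := c] \<in> verts ?P" using x x' layer_subset by blast+
  show "(v[i := c], w[i := c]) \<in> arcs ?P"
    using k len ki i by (intro sprod_list_arcsI[OF xV x'V k(1)]) (auto simp: nth_list_update)
  show "(w, w[i := c]) \<in> arcs ?P"
    using c vwi len i by (intro sprod_list_arcsI[OF w x'V i]) auto
qed

lemma layer_index_step:
  assumes As: "connected_prime_factors As" and Bs: "wf_sgraphs Bs"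
    and h: "sequiv_via h S (sprod_list As) (sprod_list Bs)" and i: "i < length As"
    and vw: "(v, w) \<in> arcs (sprod_list As)" "w \<notin> layer As i v"
    and j: "j < length Bs" "h ` layer As i v = layer Bs j (h v)"
    and j': "h ` layer As i w = layer Bs j' (h w)"
  shows "j' = j"
proof (rule ccontr)
  assume "j' \<noteq> j"
  let ?P = "sprod_list As" and ?Q = "sprod_list Bs"
  note wA = connected_prime_factorsD(1)[OF As]
  have Ai: "wf_sgraph (As ! i)" using wA i by simp
  have inj: "inj_on h (verts ?P)" using bij_betw_imp_inj_on[OF sequiv_viaD(1)[OF h]] .
  have arc: "(p, q) \<in> arcs ?P \<Longrightarrow> (h p, h q) \<in> arcs ?Q" for p q
    using sequiv_viaD(3)[OF h] sprod_list_arc_verts[of p q As] by blast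
  have hV: "h p \<in> verts ?Q" if "p \<in> verts ?P" for p
    using bij_betw_apply[OF sequiv_viaD(1)[OF h] that] .
  have v: "v \<in> verts ?P" and w: "w \<in> verts ?P" using sprod_list_arc_verts[OF vw(1)] by auto
  obtain c where "(v ! i, c) \<in> arcs (As ! i)"
    using sconnected_arc_from[OF Ai _ _ sprod_list_vertsD(2)[OF v i]]
      connected_prime_factorsD(2)[OF As i] by blast
  note sq = layer_square[OF wA i vw this]
  let ?x = "v[i := c]" and ?x' = "w[i := c]"
  have xV: "?x \<in> verts ?P" and x'V: "?x' \<in> verts ?P" using sq(1,2) layer_subset by blast+
  obtain b where b: "b < length Bs" "h v ! b \<noteq> h w ! b"
    using sprod_list_arc_neq[OF Bs arc[OF vw(1)]] by blast
  have hw: "h w \<in> layer Bs b (h v)"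
    using sprod_list_arc_at(2)[OF arc[OF vw(1)] b] hV[OF w] unfolding layer_def by auto
  have "b \<noteq> j"
  proof
    assume "b = j"
    with hw j(2) obtain w' where "w' \<in> layer As i v" "h w = h w'" by auto
    with inj w layer_subset have "w = w'" by (meson inj_onD subsetD)
    with vw(2) \<open>w' \<in> layer As i v\<close> show False by simp
  qed
  have "h ?x' \<in> layer Bs j (h w)"
  proof (rule square_completion[OF Bs j(1) b(1) \<open>b \<noteq> j\<close>[symmetric] hV[OF v]])
    show "h ?x \<in> layer Bs j (h v)" using sq(1) j(2) by blast
    show "h ?x \<noteq> h v" "h w \<noteq> h v" "h ?x' \<noteq> h v"
      using sq(3,4) b(2) inj xV x'V v by (auto dest: inj_onD)
  qed (use hw arc sq(6,7) in auto)
  moreover have "h ?x' \<in> layer Bs j' (h w)" using sq(2) j' by blast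
  ultimately have "h ?x' = h w"
    using layer_inter[OF _ _ j(1) \<open>j' \<noteq> j\<close>[symmetric] hV[OF w]] by blast
  with sq(5) inj x'V w show False by (meson inj_onD)
qed

lemma prime_layer_image_uniform:
  assumes As: "connected_prime_factors As" and Bs: "connected_prime_factors Bs"
    and h: "sequiv_via h S (sprod_list As) (sprod_list Bs)"
    and conn: "sconnected (sprod_list As)" and i: "i < length As"
  obtains j where "j < length Bs" "\<And>v. v \<in> verts (sprod_list As) \<Longrightarrow> h ` layer As i v = layer Bs j (h v)"
proof -
  let ?P = "sprod_list As"
  note wB = connected_prime_factorsD(1)[OF Bs]
  obtain v0 where v0: "v0 \<in> verts ?P" using conn unfolding sconnected_def by blast
  obtain j where j: "j < length Bs" "h ` layer As i v0 = layer Bs j (h v0)"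
    using prime_layer_image_eq[OF As Bs h i v0] .
  have "h ` layer As i v = layer Bs j (h v)" if "v \<in> verts ?P" for v
  proof -
    have "(v0, v) \<in> (arcs ?P)\<^sup>*" using conn v0 that unfolding sconnected_def by blast
    then show ?thesis
    proof induction
      case (step y z)
      have z: "z \<in> verts ?P" using sprod_list_arc_verts[OF step.hyps(2)] by blast
      show ?case
      proof (cases "z \<in> layer As i y")
        case True
        then have "h z \<in> layer Bs j (h y)" using step.IH by blast
        with True step.IH show ?thesis using layer_eq by metis
      next
        case False
        obtain j' where "h ` layer As i z = layer Bs j' (h z)"
          using prime_layer_image_eq[OF As Bs h i z] by blast
        with layer_index_step[OF As wB h i step.hyps(2) False j(1) step.IH] show ?thesis by simp
      qed
    qed (use j in simp)
  qed
  with j(1) that show thesis by blast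
qed

lemma image_rtrancl_bij:
  assumes h: "bij_betw h V W" and R: "R \<subseteq> V \<times> V" and R': "R' \<subseteq> W \<times> W"
    and iff: "\<And>p q. p \<in> V \<Longrightarrow> q \<in> V \<Longrightarrow> (p, q) \<in> R \<longleftrightarrow> (h p, h q) \<in> R'"
    and v: "v \<in> V"
  shows "h ` {x. (v, x) \<in> R\<^sup>*} = {y. (h v, y) \<in> R'\<^sup>*}"
proof
  show "h ` {x. (v, x) \<in> R\<^sup>*} \<subseteq> {y. (h v, y) \<in> R'\<^sup>*}"
    using R iff by (auto elim!: rtrancl_map[where f = h])
  show "{y. (h v, y) \<in> R'\<^sup>*} \<subseteq> h ` {x. (v, x) \<in> R\<^sup>*}"
  proof
    let ?g = "inv_into V h"
    fix y assume "y \<in> {y. (h v, y) \<in> R'\<^sup>*}"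
    then have y: "(h v, y) \<in> R'\<^sup>*" by simp
    have hg: "h (?g p) = p" "?g p \<in> V" if "p \<in> W" for p
      using that bij_betw_inv_into_right[OF h] bij_betw_apply[OF bij_betw_inv_into[OF h]] by auto
    have "(?g (h v), ?g y) \<in> R\<^sup>*"
      using y
    proof (rule rtrancl_map)
      show "(?g p, ?g q) \<in> R" if "(p, q) \<in> R'" for p q
        using that R' iff[of "?g p" "?g q"] hg by auto
    qed
    moreover have "y \<in> W \<or> y = h v" using y R' by (auto elim: rtranclE)
    ultimately show "y \<in> h ` {x. (v, x) \<in> R\<^sup>*}"
      using hg inv_into_f_f[OF bij_betw_imp_inj_on[OF h] v] v by (metis (mono_tags, lifting) image_eqI mem_Collect_eq)
  qed
qed

lemma colayer_image:
  assumes As: "connected_prime_factors As" and Bs: "connected_prime_factors Bs"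
    and h: "sequiv_via h S (sprod_list As) (sprod_list Bs)"
    and i: "i < length As" and j: "j < length Bs"
    and layers: "\<And>v. v \<in> verts (sprod_list As) \<Longrightarrow> h ` layer As i v = layer Bs j (h v)"
    and v: "v \<in> verts (sprod_list As)"
  shows "h ` colayer As i v = colayer Bs j (h v)"
proof -
  let ?P = "sprod_list As" and ?Q = "sprod_list Bs"
  note wA = connected_prime_factorsD(1)[OF As] and wB = connected_prime_factorsD(1)[OF Bs]
  note b = sequiv_viaD(1)[OF h]
  have inj: "inj_on h (verts ?P)" using bij_betw_imp_inj_on[OF b] .
  have conn: "\<forall>G\<in>set As. sconnected G" "\<forall>G\<in>set Bs. sconnected G"
    using As Bs unfolding connected_prime_factors_def by auto
  have iff: "(p, q) \<in> colayer_arcs As i \<longleftrightarrow> (h p, h q) \<in> colayer_arcs Bs j"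
    if pq: "p \<in> verts ?P" "q \<in> verts ?P" for p q
  proof (cases "(p, q) \<in> arcs ?P")
    case True
    then have hpq: "(h p, h q) \<in> arcs ?Q" using sequiv_viaD(3)[OF h pq] by simp
    have "q \<in> layer As i p \<longleftrightarrow> h q \<in> h ` layer As i p"
      using inj_on_image_mem_iff[OF inj pq(2) layer_subset] by simp
    then have "q \<in> layer As i p \<longleftrightarrow> h q \<in> layer Bs j (h p)" using layers[OF pq(1)] by simp
    with True hpq show ?thesis
      unfolding colayer_arcs_def using arc_in_layer_iff[OF wA True i] arc_in_layer_iff[OF wB hpq j] by auto
  qed (use sequiv_viaD(3)[OF h pq] in \<open>auto simp: colayer_arcs_def\<close>)
  have sub: "colayer_arcs Gs k \<subseteq> verts (sprod_list Gs) \<times> verts (sprod_list Gs)" for Gs k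
    unfolding colayer_arcs_def using sprod_list_arc_verts by auto
  have "h ` {x. (v, x) \<in> (colayer_arcs As i)\<^sup>*} = {y. (h v, y) \<in> (colayer_arcs Bs j)\<^sup>*}"
    by (rule image_rtrancl_bij[OF b sub[of As i] sub[of Bs j] iff v])
  then show ?thesis
    unfolding colayer_eq_rtrancl[OF wA conn(1) i v]
      colayer_eq_rtrancl[OF wB conn(2) j bij_betw_apply[OF b v]] .
qed

lemma common_prime_factor:
  assumes As: "connected_prime_factors As" and Bs: "connected_prime_factors Bs"
    and h: "sequiv_via h S (sprod_list As) (sprod_list Bs)"
    and conn: "sconnected (sprod_list As)" and i: "i < length As"
  obtains j where "j < length Bs" "sequiv (Bs ! j) (As ! i)"
    "sequiv (sprod_list (remove_nth i As)) (sprod_list (remove_nth j Bs))"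
proof -
  let ?P = "sprod_list As" and ?Q = "sprod_list Bs"
  note wA = connected_prime_factorsD(1)[OF As] and wB = connected_prime_factorsD(1)[OF Bs]
  obtain j where j: "j < length Bs" and layers: "\<And>v. v \<in> verts ?P \<Longrightarrow> h ` layer As i v = layer Bs j (h v)"
    using prime_layer_image_uniform[OF As Bs h conn i] by blast
  obtain v where v: "v \<in> verts ?P" using conn unfolding sconnected_def by blast
  have hv: "h v \<in> verts ?Q" using bij_betw_apply[OF sequiv_viaD(1)[OF h] v] .
  have Ai: "wf_sgraph (As ! i)" using wA i by simp
  have "sequiv (As ! i) (induced ?P (layer As i v))"
    using sequiv_sym[OF wf_sgraph_closed[OF Ai] sequivI[OF layer_via_factor[OF wA i v]]] .
  moreover have "sequiv (induced ?P (layer As i v)) (induced ?Q (layer Bs j (h v)))"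
    using sequivI[OF sequiv_via_induced[OF h layer_subset[of As i v]]] layers[OF v] by simp
  moreover have "sequiv (induced ?Q (layer Bs j (h v))) (Bs ! j)"
    using sequivI[OF layer_via_factor[OF wB j hv]] .
  ultimately have "sequiv (As ! i) (Bs ! j)"
    using sequiv_trans[OF wf_sgraph_closed[OF Ai]] sequiv_trans[OF closed_induced] by blast
  with wB j have factor: "sequiv (Bs ! j) (As ! i)"
    using sequiv_sym[OF wf_sgraph_closed, of "Bs ! j"] by simp
  have "sequiv (sprod_list (remove_nth i As)) (induced ?P (colayer As i v))"
    using sequiv_sym[OF closed_sprod_list colayer_sequiv_remove_nth[OF wA i v]] .
  moreover have "sequiv (induced ?P (colayer As i v)) (induced ?Q (colayer Bs j (h v)))"
    using sequivI[OF sequiv_via_induced[OF h, of "colayer As i v"]]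
      colayer_image[OF As Bs h i j layers v] unfolding colayer_def by auto
  moreover have "sequiv (induced ?Q (colayer Bs j (h v))) (sprod_list (remove_nth j Bs))"
    using colayer_sequiv_remove_nth[OF wB j hv] .
  ultimately have "sequiv (sprod_list (remove_nth i As)) (sprod_list (remove_nth j Bs))"
    using sequiv_trans[OF closed_sprod_list] sequiv_trans[OF closed_induced] by blast
  with j factor that show thesis by blast
qed

lemma prime_s_decompositionE:
  assumes D: "prime_s_decomposition D G" and G: "wf_sgraph G" "sconnected G" "arcs G \<noteq> {}"
  obtains Hs f S where "mset Hs = D" "sequiv_via f S G (sprod_list Hs)" "connected_prime_factors Hs"
    "Hs \<noteq> []"
proof -
  obtain Hs where Hs: "mset Hs = D" "sequiv G (sprod_list Hs)"
    and factors: "\<forall>H\<in>set Hs. wf_sgraph H \<and> arcs H \<noteq> {} \<and> s_prime H"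
    using D unfolding prime_s_decomposition_def s_decomposition_def by fastforce
  obtain f S where f: "sequiv_via f S G (sprod_list Hs)" using Hs(2) sequiv_iff_via by blast
  have "sconnected (sprod_list Hs)" using sconnected_via[OF G(1,2) f] .
  with factors have "connected_prime_factors Hs"
    unfolding connected_prime_factors_def by (metis in_set_conv_nth sconnected_factor)
  moreover have "Hs \<noteq> []"
  proof
    obtain p q where pq: "(p, q) \<in> arcs G" using G(3) by auto
    then have "(f p, f q) \<in> arcs (sprod_list Hs)"
      using sequiv_viaD(3)[OF f] wf_sgraph_arc_verts[OF G(1) pq] by blast
    moreover assume "Hs = []"
    ultimately show False by (auto elim: sprod_list_arcsE)
  qed
  ultimately show thesis using that Hs(1) f by blast
qed

lemma nat_cofactor:
  assumes Hs: "wf_sgraphs Hs" and i: "i < length Hs"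
  obtains Y :: "nat sgraph" where "wf_sgraph Y" "sequiv Y (sprod_list (remove_nth i Hs))"
    "sequiv (sprod_list Hs) (sprod (Hs ! i) Y)"
proof -
  have Hi: "wf_sgraph (Hs ! i)" and R: "wf_sgraphs (remove_nth i Hs)"
    using Hs i set_remove_nth_subset[of i Hs] by auto
  obtain Y :: "nat sgraph" and g where Y: "wf_sgraph Y" "sequiv_via g {} (sprod_list (remove_nth i Hs)) Y"
    using ex_nat_copy[OF wf_sprod_list[OF R]] by blast
  obtain \<phi> where "sequiv_via \<phi> {} (sprod_list Hs) (sprod (Hs ! i) (sprod_list (remove_nth i Hs)))"
    using sprod_list_split_via[OF Hs i] by blast
  moreover have "sequiv (sprod (Hs ! i) (sprod_list (remove_nth i Hs))) (sprod (Hs ! i) Y)"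
    using sequivI[OF sprod_via[OF Hi wf_sprod_list[OF R] sequiv_via_id Y(2)]] .
  ultimately have "sequiv (sprod_list Hs) (sprod (Hs ! i) Y)"
    using sequiv_trans[OF closed_sprod_list] sequivI by blast
  with Y that show thesis using sequiv_sym[OF wf_sgraph_closed[OF Y(1)] sequivI[OF Y(2)]] by blast
qed

lemma s_decomposition_remove_nth:
  assumes "connected_prime_factors Hs" "sequiv Y (sprod_list (remove_nth i Hs))"
  shows "s_decomposition (mset (remove_nth i Hs)) Y"
  using assms set_remove_nth_subset[of i Hs]
  unfolding s_decomposition_def connected_prime_factors_def s_prime_def by auto

lemma mset_sequiv_remove_nth:
  "i < length Hs \<Longrightarrow> sequiv (Hs ! i) X \<Longrightarrow> mset_sequiv (mset Hs) (add_mset X (mset (remove_nth i Hs)))"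
  by (subst mset_remove_nth) (auto intro!: rel_mset_Plus multiset.rel_refl_strong sequiv_refl)

theorem lemma4p10:
  fixes G :: "'a sgraph" and D1 D2 :: "'b sgraph multiset"
  assumes "wf_sgraph G" and "sconnected G" and "arcs G \<noteq> {}"
    and "prime_s_decomposition D1 G" and "prime_s_decomposition D2 G"
  shows "\<exists>(X :: 'b sgraph) (Y :: nat sgraph) D1' D2'.
           wf_sgraph X \<and> wf_sgraph Y \<and> sequiv G (sprod X Y)
         \<and> mset_sequiv D1 (add_mset X D1') \<and> mset_sequiv D2 (add_mset X D2')
         \<and> s_decomposition D1' Y \<and> s_decomposition D2' Y"
proof -
  obtain As f S where As: "mset As = D1" "sequiv_via f S G (sprod_list As)"
    "connected_prime_factors As" "As \<noteq> []"
    using prime_s_decompositionE[OF assms(4,1-3)] .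
  obtain Bs g T where Bs: "mset Bs = D2" "sequiv_via g T G (sprod_list Bs)" "connected_prime_factors Bs"
    using prime_s_decompositionE[OF assms(5,1-3)] .
  note wA = connected_prime_factorsD(1)[OF As(3)]
  obtain h S' where h: "sequiv_via h S' (sprod_list As) (sprod_list Bs)"
    using sequiv_via_comp[OF closed_sprod_list sequiv_via_inv[OF closed_sprod_list As(2)] Bs(2)] by blast
  obtain j where j: "j < length Bs" "sequiv (Bs ! j) (As ! 0)"
    "sequiv (sprod_list (remove_nth 0 As)) (sprod_list (remove_nth j Bs))"
    using common_prime_factor[OF As(3) Bs(3) h sconnected_via[OF assms(1,2) As(2)]] As(4) by blast
  obtain Y :: "nat sgraph" where Y: "wf_sgraph Y" "sequiv Y (sprod_list (remove_nth 0 As))"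
    "sequiv (sprod_list As) (sprod (As ! 0) Y)"
    using nat_cofactor[OF wA] As(4) by blast
  have "sequiv G (sprod (As ! 0) Y)"
    using sequiv_trans[OF wf_sgraph_closed[OF assms(1)] sequivI[OF As(2)] Y(3)] .
  moreover have "mset_sequiv D1 (add_mset (As ! 0) (mset (remove_nth 0 As)))"
    using mset_sequiv_remove_nth[OF _ sequiv_refl] As(1,4) by blast
  moreover have "mset_sequiv D2 (add_mset (As ! 0) (mset (remove_nth j Bs)))"
    using mset_sequiv_remove_nth[OF j(1,2)] Bs(1) by simp
  moreover have "s_decomposition (mset (remove_nth j Bs)) Y"
    using s_decomposition_remove_nth[OF Bs(3) sequiv_trans[OF wf_sgraph_closed[OF Y(1)] Y(2) j(3)]] .
  ultimately show ?thesis
    using wA As(4) Y(1) s_decomposition_remove_nth[OF As(3) Y(2)] by (metis nth_mem length_greater_0_conv)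
qed

end
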